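(* Let $\mathcal{F}^\mathcal{P}$ be the family of product chains induced by $\mathcal{F}$ and $\mathcal{P}$, and assume all chains in $\mathcal{F}$ are reversible. Then $\mathcal{F}^\mathcal{P}$ has an $L^2$-cutoff if and only if $\tilde\tau_n(c)\rho_{n,\tilde j_n(c)}\to\infty$ for all $c>0$. Further, if $\mathcal{F}^\mathcal{P}$ has an $L^2$-cutoff, then $\tilde\tau_n(c)$ is an $L^2$-cutoff time for every $c>0$ and \[|T_{n,2}(\mu_n,\epsilon)-\tilde\tau_n(c)|=O\big(\sqrt{\tilde\tau_n(c)/\rho_{n,\tilde j_n(c)}}\big)\quad\forall\epsilon,c>0.\]
   Context: $\mathcal{F}=\{(\mu_{n,i},\mathcal{S}_{n,i},L_{n,i},\pi_{n,i}):1\le i\le\ell_n,n\ge1\}$ is a triangular array of irreducible continuous-time finite Markov chains and $\mathcal{P}=\{p_{n,i}>0\}$ with $\sum_ip_{n,i}\le1$. The product chain $(\mu_n,\mathcal{S}_n,L_n,\pi_n)$ has $\mathcal{S}_n=\prod_i\mathcal{S}_{n,i}$, $\mu_n=\prod_i\mu_{n,i}$, $\pi_n=\prod_i\pi_{n,i}$, $L_n=\sum_ip_{n,i}I_{n,1}\otimes\cdots\otimes L_{n,i}\otimes\cdots\otimes I_{n,\ell_n}$. Let $0=\lambda_{n,i,0},\lambda_{n,i,1},\dots,\lambda_{n,i,|\mathcal{S}_{n,i}|-1}$ be the eigenvalues of $-L_{n,i}$ with $L^2(\pi_{n,i})$-orthonormal right eigenvectors $\phi_{n,i,0}=\mathbf1,\phi_{n,i,1},\dots$.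 Enumerate the multiset $\{p_{n,i}\lambda_{n,i,j}:1\le j<|\mathcal{S}_{n,i}|,1\le i\le\ell_n\}$ as $\rho_{n,1}\le\rho_{n,2}\le\cdots$ and let $\psi_{n,l}$ be the corresponding value $\mu_{n,i}(\phi_{n,i,j})=\sum_x\mu_{n,i}(x)\phi_{n,i,j}(x)$. For $c>0$: $\tilde j_n(c)=\min\{j\ge1:\sum_{l=1}^j\psi_{n,l}^2>c\}$ and $\tilde\tau_n(c)=\max_{j\ge\tilde j_n(c)}\frac{\log(1+\sum_{l=1}^j|\psi_{n,l}|^2)}{2\rho_{n,j}}$. $d_{n,2}(\mu_n,t)=\|\mu_ne^{tL_n}/\pi_n-1\|_{L^2(\pi_n)}$, $T_{n,2}(\mu_n,\epsilon)=\min\{t\ge0:d_{n,2}(\mu_n,t)\le\epsilon\}$. $L^2$-cutoff: there is $t_n>0$ with $d_{n,2}(\mu_n,(1+a)t_n)\to0$ and $d_{n,2}(\mu_n,(1-a)t_n)\to\infty$ for all $a\in(0,1)$ ($t_n$ a cutoff time). $a_n=O(b_n)$ means $\sup_na_n/b_n<\infty$. *)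

theory Defs
  imports "HOL-Analysis.Analysis"
begin

definition is_generator :: "'a set \<Rightarrow> ('a \<Rightarrow> 'a \<Rightarrow> real) \<Rightarrow> bool" where
  "is_generator S L \<longleftrightarrow>
     (\<forall>x\<in>S. \<forall>y\<in>S. x \<noteq> y \<longrightarrow> L x y \<ge> 0) \<and> (\<forall>x\<in>S. (\<Sum>y\<in>S. L x y) = 0)"

definition irreducible_gen :: "'a set \<Rightarrow> ('a \<Rightarrow> 'a \<Rightarrow> real) \<Rightarrow> bool" where
  "irreducible_gen S L \<longleftrightarrow>
     (\<forall>x\<in>S. \<forall>y\<in>S. (x, y) \<in> {(u, v). u \<in> S \<and> v \<in> S \<and> u \<noteq> v \<and> L u v > 0}\<^sup>*)"

definition is_distribution :: "'a set \<Rightarrow> ('a \<Rightarrow> real) \<Rightarrow> bool" where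
  "is_distribution S \<mu> \<longleftrightarrow> (\<forall>x\<in>S. \<mu> x \<ge> 0) \<and> sum \<mu> S = 1"

definition stationary :: "'a set \<Rightarrow> ('a \<Rightarrow> 'a \<Rightarrow> real) \<Rightarrow> ('a \<Rightarrow> real) \<Rightarrow> bool" where
  "stationary S L \<pi> \<longleftrightarrow> (\<forall>x\<in>S. \<pi> x > 0) \<and> sum \<pi> S = 1 \<and>
     (\<forall>y\<in>S. (\<Sum>x\<in>S. \<pi> x * L x y) = 0)"

definition reversible :: "'a set \<Rightarrow> ('a \<Rightarrow> 'a \<Rightarrow> real) \<Rightarrow> ('a \<Rightarrow> real) \<Rightarrow> bool" where
  "reversible S L \<pi> \<longleftrightarrow> (\<forall>x\<in>S. \<forall>y\<in>S. \<pi> x * L x y = \<pi> y * L y x)"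

definition finite_irred_chain :: "'a set \<Rightarrow> ('a \<Rightarrow> 'a \<Rightarrow> real) \<Rightarrow> ('a \<Rightarrow> real) \<Rightarrow> bool" where
  "finite_irred_chain S L \<pi> \<longleftrightarrow> finite S \<and> S \<noteq> {} \<and> is_generator S L \<and>
     irreducible_gen S L \<and> stationary S L \<pi>"

fun kpow :: "'a set \<Rightarrow> ('a \<Rightarrow> 'a \<Rightarrow> real) \<Rightarrow> nat \<Rightarrow> 'a \<Rightarrow> 'a \<Rightarrow> real" where
  "kpow S L 0 x y = (if x = y then 1 else 0)"
| "kpow S L (Suc k) x y = (\<Sum>z\<in>S. L x z * kpow S L k z y)"

definition heat :: "'a set \<Rightarrow> ('a \<Rightarrow> 'a \<Rightarrow> real) \<Rightarrow> real \<Rightarrow> 'a \<Rightarrow> 'a \<Rightarrow> real" where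
  "heat S L t x y = (\<Sum>k. t ^ k / fact k * kpow S L k x y)"

definition evolve :: "'a set \<Rightarrow> ('a \<Rightarrow> 'a \<Rightarrow> real) \<Rightarrow> ('a \<Rightarrow> real) \<Rightarrow> real \<Rightarrow> 'a \<Rightarrow> real" where
  "evolve S L \<mu> t y = (\<Sum>x\<in>S. \<mu> x * heat S L t x y)"

definition d2 :: "'a set \<Rightarrow> ('a \<Rightarrow> 'a \<Rightarrow> real) \<Rightarrow> ('a \<Rightarrow> real) \<Rightarrow> ('a \<Rightarrow> real) \<Rightarrow> real \<Rightarrow> real" where
  "d2 S L \<pi> \<mu> t = sqrt (\<Sum>y\<in>S. \<pi> y * (evolve S L \<mu> t y / \<pi> y - 1)\<^sup>2)"

definition T2 :: "'a set \<Rightarrow> ('a \<Rightarrow> 'a \<Rightarrow> real) \<Rightarrow> ('a \<Rightarrow> real) \<Rightarrow> ('a \<Rightarrow> real) \<Rightarrow> real \<Rightarrow> real" where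
  "T2 S L \<pi> \<mu> \<epsilon> = Inf {t. t \<ge> 0 \<and> d2 S L \<pi> \<mu> t \<le> \<epsilon>}"

text \<open>Components are indexed by i < l (0-based). States of the product are functions
  x with x i in S i for i < l (and undefined elsewhere).\<close>

definition prod_space :: "nat \<Rightarrow> (nat \<Rightarrow> 'a set) \<Rightarrow> (nat \<Rightarrow> 'a) set" where
  "prod_space l S = PiE {..<l} S"

definition prod_measure :: "nat \<Rightarrow> (nat \<Rightarrow> 'a \<Rightarrow> real) \<Rightarrow> (nat \<Rightarrow> 'a) \<Rightarrow> real" where
  "prod_measure l \<mu> x = (\<Prod>i<l. \<mu> i (x i))"

text \<open>L = sum_i p_i I (x) ... (x) L_i (x) ... (x) I\<close>
definition prod_gen :: "nat \<Rightarrow> (nat \<Rightarrow> real) \<Rightarrow> (nat \<Rightarrow> 'a \<Rightarrow> 'a \<Rightarrow> real)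
    \<Rightarrow> (nat \<Rightarrow> 'a) \<Rightarrow> (nat \<Rightarrow> 'a) \<Rightarrow> real" where
  "prod_gen l p L x y =
     (\<Sum>i<l. p i * (L i (x i) (y i) * (\<Prod>j\<in>{..<l} - {i}. (if x j = y j then 1 else 0))))"

definition prod_d2 :: "nat \<Rightarrow> (nat \<Rightarrow> 'a set) \<Rightarrow> (nat \<Rightarrow> real) \<Rightarrow> (nat \<Rightarrow> 'a \<Rightarrow> 'a \<Rightarrow> real)
    \<Rightarrow> (nat \<Rightarrow> 'a \<Rightarrow> real) \<Rightarrow> (nat \<Rightarrow> 'a \<Rightarrow> real) \<Rightarrow> real \<Rightarrow> real" where
  "prod_d2 l S p L \<pi> \<mu> t =
     d2 (prod_space l S) (prod_gen l p L) (prod_measure l \<pi>) (prod_measure l \<mu>) t"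

definition prod_T2 :: "nat \<Rightarrow> (nat \<Rightarrow> 'a set) \<Rightarrow> (nat \<Rightarrow> real) \<Rightarrow> (nat \<Rightarrow> 'a \<Rightarrow> 'a \<Rightarrow> real)
    \<Rightarrow> (nat \<Rightarrow> 'a \<Rightarrow> real) \<Rightarrow> (nat \<Rightarrow> 'a \<Rightarrow> real) \<Rightarrow> real \<Rightarrow> real" where
  "prod_T2 l S p L \<pi> \<mu> \<epsilon> =
     T2 (prod_space l S) (prod_gen l p L) (prod_measure l \<pi>) (prod_measure l \<mu>) \<epsilon>"

definition orthonormal_eigendata :: "'a set \<Rightarrow> ('a \<Rightarrow> 'a \<Rightarrow> real) \<Rightarrow> ('a \<Rightarrow> real)
    \<Rightarrow> (nat \<Rightarrow> real) \<Rightarrow> (nat \<Rightarrow> 'a \<Rightarrow> real) \<Rightarrow> bool" where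
  "orthonormal_eigendata S L \<pi> lam phi \<longleftrightarrow>
     lam 0 = 0 \<and> (\<forall>x\<in>S. phi 0 x = 1) \<and>
     (\<forall>j<card S. \<forall>x\<in>S. (\<Sum>y\<in>S. L x y * phi j y) = - lam j * phi j x) \<and>
     (\<forall>j<card S. \<forall>k<card S. (\<Sum>x\<in>S. \<pi> x * phi j x * phi k x) = (if j = k then 1 else 0))"

definition num_eig :: "nat \<Rightarrow> (nat \<Rightarrow> 'a set) \<Rightarrow> nat" where
  "num_eig l S = (\<Sum>i<l. card (S i) - 1)"

definition rho :: "(nat \<Rightarrow> real) \<Rightarrow> (nat \<Rightarrow> nat \<Rightarrow> real) \<Rightarrow> (nat \<Rightarrow> nat \<times> nat) \<Rightarrow> nat \<Rightarrow> real" where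
  "rho p lam sig l = p (fst (sig l)) * lam (fst (sig l)) (snd (sig l))"

definition psi :: "(nat \<Rightarrow> 'a set) \<Rightarrow> (nat \<Rightarrow> 'a \<Rightarrow> real) \<Rightarrow> (nat \<Rightarrow> nat \<Rightarrow> 'a \<Rightarrow> real)
    \<Rightarrow> (nat \<Rightarrow> nat \<times> nat) \<Rightarrow> nat \<Rightarrow> real" where
  "psi S \<mu> phi sig l = (\<Sum>x\<in>S (fst (sig l)). \<mu> (fst (sig l)) x * phi (fst (sig l)) (snd (sig l)) x)"

definition sorted_enum :: "nat \<Rightarrow> (nat \<Rightarrow> 'a set) \<Rightarrow> (nat \<Rightarrow> real) \<Rightarrow> (nat \<Rightarrow> nat \<Rightarrow> real)
    \<Rightarrow> (nat \<Rightarrow> nat \<times> nat) \<Rightarrow> bool" where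
  "sorted_enum l S p lam sig \<longleftrightarrow>
     bij_betw sig {1..num_eig l S} {(i, j). i < l \<and> 1 \<le> j \<and> j < card (S i)} \<and>
     (\<forall>a b. 1 \<le> a \<longrightarrow> a \<le> b \<longrightarrow> b \<le> num_eig l S \<longrightarrow> rho p lam sig a \<le> rho p lam sig b)"

definition jt_defined :: "nat \<Rightarrow> (nat \<Rightarrow> 'a set) \<Rightarrow> (nat \<Rightarrow> 'a \<Rightarrow> real)
    \<Rightarrow> (nat \<Rightarrow> nat \<Rightarrow> 'a \<Rightarrow> real) \<Rightarrow> (nat \<Rightarrow> nat \<times> nat) \<Rightarrow> real \<Rightarrow> bool" where
  "jt_defined l S \<mu> phi sig c \<longleftrightarrow>
     (\<exists>j. 1 \<le> j \<and> j \<le> num_eig l S \<and> (\<Sum>k=1..j. (psi S \<mu> phi sig k)\<^sup>2) > c)"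

definition jt :: "nat \<Rightarrow> (nat \<Rightarrow> 'a set) \<Rightarrow> (nat \<Rightarrow> 'a \<Rightarrow> real)
    \<Rightarrow> (nat \<Rightarrow> nat \<Rightarrow> 'a \<Rightarrow> real) \<Rightarrow> (nat \<Rightarrow> nat \<times> nat) \<Rightarrow> real \<Rightarrow> nat" where
  "jt l S \<mu> phi sig c =
     (LEAST j. 1 \<le> j \<and> j \<le> num_eig l S \<and> (\<Sum>k=1..j. (psi S \<mu> phi sig k)\<^sup>2) > c)"

definition taut :: "nat \<Rightarrow> (nat \<Rightarrow> 'a set) \<Rightarrow> (nat \<Rightarrow> real) \<Rightarrow> (nat \<Rightarrow> nat \<Rightarrow> real)
    \<Rightarrow> (nat \<Rightarrow> 'a \<Rightarrow> real) \<Rightarrow> (nat \<Rightarrow> nat \<Rightarrow> 'a \<Rightarrow> real) \<Rightarrow> (nat \<Rightarrow> nat \<times> nat) \<Rightarrow> real \<Rightarrow> real" where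
  "taut l S p lam \<mu> phi sig c =
     Max ((\<lambda>j. ln (1 + (\<Sum>k=1..j. \<bar>psi S \<mu> phi sig k\<bar>\<^sup>2)) / (2 * rho p lam sig j))
            ` {jt l S \<mu> phi sig c .. num_eig l S})"

definition L2_cutoff_time :: "(nat \<Rightarrow> real \<Rightarrow> real) \<Rightarrow> (nat \<Rightarrow> real) \<Rightarrow> bool" where
  "L2_cutoff_time d t \<longleftrightarrow> (\<forall>\<^sub>F n in sequentially. t n > 0) \<and>
     (\<forall>a. 0 < a \<and> a < 1 \<longrightarrow>
        ((\<lambda>n. d n ((1 + a) * t n)) \<longlonglongrightarrow> 0) \<and>
        filterlim (\<lambda>n. d n ((1 - a) * t n)) at_top sequentially)"

definition has_L2_cutoff :: "(nat \<Rightarrow> real \<Rightarrow> real) \<Rightarrow> bool" where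
  "has_L2_cutoff d \<longleftrightarrow> (\<exists>t. L2_cutoff_time d t)"

end

theory Submission
  imports Defs
begin

text \<open>The eigenfunctions of a product of reversible chains are tensor products of those of the
  factors, so \<open>d\<^sub>2(t)\<^sup>2 = \<Prod>\<^sub>i (1 + F\<^sub>i(t)) - 1\<close> with \<open>F\<^sub>i(t) = \<Sum>\<^sub>j \<psi>\<^sub>i\<^sub>j\<^sup>2 exp (-2t p\<^sub>i \<lambda>\<^sub>i\<^sub>j)\<close>.
  Hence \<open>d\<^sub>2(t)\<^sup>2\<close> lies between \<open>F(t) = \<Sum>\<^sub>k \<psi>\<^sub>k\<^sup>2 exp (-2t \<rho>\<^sub>k)\<close> and \<open>exp F(t) - 1\<close>, and everything
  reduces to a sum of exponentials with nondecreasing rates. Write \<open>\<tau> = \<tau>(c)\<close> and let \<open>\<rho>\<close> be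
  the rate at the first index where \<open>\<Sum>\<^sub>k\<^sub>\<le>\<^sub>j \<psi>\<^sub>k\<^sup>2\<close> exceeds \<open>c\<close>. The choice of \<open>\<tau>\<close> gives
  \<open>F(t) \<ge> exp (2(\<tau> - t)\<rho>) - 1\<close>, and Abel summation gives
  \<open>F(t) \<le> c + t/(t - \<tau>) exp (-2(t - \<tau>)\<rho>)\<close> for \<open>t > \<tau>\<close>. So the distance drops from large to
  small within a window of width of order \<open>1/\<rho>\<close> around \<open>\<tau>\<close>, which is a cutoff exactly when
  \<open>\<tau>\<rho> \<rightarrow> \<infinity>\<close>; evaluating the upper bound at \<open>t = \<tau> + \<surd>(\<tau>/\<rho>)\<close> gives the window estimate.\<close>

section \<open>Spectral expansion of the \<open>L\<^sup>2\<close>-distance\<close>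

lemma orthonormal_kernel_sq_sum:
  fixes Phi :: "'j \<Rightarrow> 'x \<Rightarrow> real" and w :: "'x \<Rightarrow> real"
  assumes fI: "finite I"
    and orth: "\<forall>J\<in>I. \<forall>K\<in>I. (\<Sum>x\<in>X. w x * Phi J x * Phi K x) = (if J = K then 1 else 0)"
  shows "(\<Sum>x\<in>X. \<Sum>y\<in>X. w x * w y * (\<Sum>J\<in>I. Phi J x * Phi J y)\<^sup>2) = real (card I)"
proof -
  have "(\<Sum>x\<in>X. \<Sum>y\<in>X. w x * w y * (\<Sum>J\<in>I. Phi J x * Phi J y)\<^sup>2)
      = (\<Sum>x\<in>X. \<Sum>y\<in>X. \<Sum>J\<in>I. \<Sum>J'\<in>I. (w x * Phi J x * Phi J' x) * (w y * Phi J y * Phi J' y))"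
    unfolding power2_eq_square sum_distrib_left sum_distrib_right
    by (intro sum.cong refl) (simp add: algebra_simps)
  also have "\<dots> = (\<Sum>x\<in>X. \<Sum>J\<in>I. \<Sum>J'\<in>I. \<Sum>y\<in>X. (w x * Phi J x * Phi J' x) * (w y * Phi J y * Phi J' y))"
    by (rule sum.cong[OF refl], subst sum.swap, rule sum.cong[OF refl], rule sum.swap)
  also have "\<dots> = (\<Sum>J\<in>I. \<Sum>J'\<in>I. \<Sum>x\<in>X. \<Sum>y\<in>X. (w x * Phi J x * Phi J' x) * (w y * Phi J y * Phi J' y))"
    by (subst sum.swap, rule sum.cong[OF refl], rule sum.swap)
  also have "\<dots> = (\<Sum>J\<in>I. \<Sum>J'\<in>I. (\<Sum>x\<in>X. w x * Phi J x * Phi J' x) * (\<Sum>y\<in>X. w y * Phi J y * Phi J' y))"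
    by (simp only: sum_product)
  also have "\<dots> = (\<Sum>J\<in>I. \<Sum>J'\<in>I. if J = J' then 1 else 0)"
    using orth by (intro sum.cong refl) auto
  finally show ?thesis using fI by simp
qed

lemma orthonormal_family_complete:
  fixes Phi :: "'j \<Rightarrow> 'x \<Rightarrow> real" and w :: "'x \<Rightarrow> real"
  assumes fX: "finite X" and fI: "finite I" and cI: "card I = card X" and pos: "\<forall>x\<in>X. w x > 0"
    and orth: "\<forall>J\<in>I. \<forall>K\<in>I. (\<Sum>x\<in>X. w x * Phi J x * Phi K x) = (if J = K then 1 else 0)"
    and x: "x \<in> X" and y: "y \<in> X"
  shows "(\<Sum>J\<in>I. Phi J x * Phi J y) * w y = (if x = y then 1 else 0)"
proof -
  text \<open>The kernels \<open>K\<close> and \<open>\<delta>\<close> below both have squared Hilbert--Schmidt norm \<open>card X\<close>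
    in \<open>L\<^sup>2(w \<otimes> w)\<close>, and their inner product is \<open>card I = card X\<close>; so they coincide.\<close>
  define K where "K x y = (\<Sum>J\<in>I. Phi J x * Phi J y)" for x y
  define \<delta> where "\<delta> x y = (if x = y then 1 / w x else 0)" for x y
  define D where "D x y = \<delta> x y - K x y" for x y
  have \<delta>\<delta>: "(\<Sum>x\<in>X. \<Sum>y\<in>X. w x * w y * (\<delta> x y)\<^sup>2) = real (card X)"
  proof -
    have "(\<Sum>x\<in>X. \<Sum>y\<in>X. w x * w y * (\<delta> x y)\<^sup>2) = (\<Sum>x\<in>X. \<Sum>y\<in>X. if x = y then 1 else 0)"
      using pos unfolding \<delta>_def by (intro sum.cong refl) (auto simp: power2_eq_square)
    thus ?thesis using fX by simp
  qed
  have \<delta>K: "(\<Sum>x\<in>X. \<Sum>y\<in>X. w x * w y * (\<delta> x y * K x y)) = real (card I)"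
  proof -
    have "(\<Sum>x\<in>X. \<Sum>y\<in>X. w x * w y * (\<delta> x y * K x y)) = (\<Sum>x\<in>X. \<Sum>y\<in>X. if x = y then w y * K x y else 0)"
    proof (intro sum.cong refl)
      fix x y assume "x \<in> X" "y \<in> X"
      thus "w x * w y * (\<delta> x y * K x y) = (if x = y then w y * K x y else 0)"
        using pos unfolding \<delta>_def by auto
    qed
    also have "\<dots> = (\<Sum>x\<in>X. w x * K x x)" using fX by simp
    also have "\<dots> = (\<Sum>J\<in>I. \<Sum>x\<in>X. w x * Phi J x * Phi J x)"
      unfolding K_def by (simp add: sum_distrib_left mult.assoc sum.swap[of _ X])
    also have "\<dots> = (\<Sum>J\<in>I. 1)" using orth by (intro sum.cong) auto
    finally show ?thesis by simp
  qed
  have KK: "(\<Sum>x\<in>X. \<Sum>y\<in>X. w x * w y * (K x y)\<^sup>2) = real (card I)"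
    unfolding K_def using fI orth by (rule orthonormal_kernel_sq_sum)
  have "(\<Sum>x\<in>X. \<Sum>y\<in>X. w x * w y * (D x y)\<^sup>2)
      = (\<Sum>x\<in>X. \<Sum>y\<in>X. w x * w y * (\<delta> x y)\<^sup>2) - 2 * (\<Sum>x\<in>X. \<Sum>y\<in>X. w x * w y * (\<delta> x y * K x y))
        + (\<Sum>x\<in>X. \<Sum>y\<in>X. w x * w y * (K x y)\<^sup>2)"
    unfolding D_def power2_eq_square
    by (simp add: sum.distrib sum_subtractf sum_distrib_left algebra_simps)
  also have "\<dots> = 0" using cI by (simp add: \<delta>\<delta> \<delta>K KK)
  finally have total: "(\<Sum>x\<in>X. \<Sum>y\<in>X. w x * w y * (D x y)\<^sup>2) = 0" .
  have nonneg: "\<And>x y. x \<in> X \<Longrightarrow> y \<in> X \<Longrightarrow> w x * w y * (D x y)\<^sup>2 \<ge> 0"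
    using pos by (simp add: less_imp_le)
  have "(\<Sum>y\<in>X. w x * w y * (D x y)\<^sup>2) = 0"
    using total x fX nonneg by (subst (asm) sum_nonneg_eq_0_iff) (auto intro: sum_nonneg)
  hence "w x * w y * (D x y)\<^sup>2 = 0" using y fX nonneg x by (subst (asm) sum_nonneg_eq_0_iff) auto
  hence "K x y = \<delta> x y" using pos x y unfolding D_def by auto
  thus ?thesis using pos x y unfolding K_def \<delta>_def by auto
qed

lemma kpow_spectral:
  fixes Phi :: "'j \<Rightarrow> 'x \<Rightarrow> real" and w :: "'x \<Rightarrow> real"
  assumes compl: "\<forall>x\<in>X. \<forall>y\<in>X. (\<Sum>J\<in>I. Phi J x * Phi J y) * w y = (if x = y then 1 else 0)"
    and eigen: "\<forall>J\<in>I. \<forall>x\<in>X. (\<Sum>y\<in>X. G x y * Phi J y) = - Lam J * Phi J x"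
    and x: "x \<in> X" and y: "y \<in> X"
  shows "kpow X G k x y = (\<Sum>J\<in>I. (- Lam J) ^ k * Phi J x * Phi J y * w y)"
  using x
proof (induction k arbitrary: x)
  case 0
  then show ?case using compl y by (simp add: sum_distrib_right)
next
  case (Suc k)
  have "kpow X G (Suc k) x y = (\<Sum>z\<in>X. G x z * (\<Sum>J\<in>I. (- Lam J) ^ k * Phi J z * Phi J y * w y))"
    using Suc by simp
  also have "\<dots> = (\<Sum>J\<in>I. (- Lam J) ^ k * Phi J y * w y * (\<Sum>z\<in>X. G x z * Phi J z))"
    by (simp add: sum_distrib_left sum_distrib_right sum.swap[of _ X] algebra_simps)
  also have "\<dots> = (\<Sum>J\<in>I. (- Lam J) ^ Suc k * Phi J x * Phi J y * w y)"
    using eigen Suc.prems by (intro sum.cong refl) (simp add: algebra_simps)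
  finally show ?case .
qed

lemma heat_spectral:
  fixes Phi :: "'j \<Rightarrow> 'x \<Rightarrow> real" and w :: "'x \<Rightarrow> real"
  assumes compl: "\<forall>x\<in>X. \<forall>y\<in>X. (\<Sum>J\<in>I. Phi J x * Phi J y) * w y = (if x = y then 1 else 0)"
    and eigen: "\<forall>J\<in>I. \<forall>x\<in>X. (\<Sum>y\<in>X. G x y * Phi J y) = - Lam J * Phi J x"
    and x: "x \<in> X" and y: "y \<in> X"
  shows "heat X G t x y = (\<Sum>J\<in>I. exp (- t * Lam J) * (Phi J x * Phi J y * w y))"
proof -
  have term_sums: "(\<lambda>k. t ^ k / fact k * ((- Lam J) ^ k * c)) sums (exp (- t * Lam J) * c)" for J c
  proof -
    have "(\<lambda>k. (- t * Lam J) ^ k /\<^sub>R fact k * c) sums (exp (- t * Lam J) * c)"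
      by (rule sums_mult2[OF exp_converges])
    moreover have "(- t * Lam J) ^ k /\<^sub>R fact k * c = t ^ k / fact k * ((- Lam J) ^ k * c)" for k
      by (simp add: power_mult_distrib[symmetric] divide_inverse algebra_simps)
    ultimately show ?thesis by simp
  qed
  have "(\<lambda>k. \<Sum>J\<in>I. t ^ k / fact k * ((- Lam J) ^ k * (Phi J x * Phi J y * w y)))
      sums (\<Sum>J\<in>I. exp (- t * Lam J) * (Phi J x * Phi J y * w y))"
    by (rule sums_sum) (rule term_sums)
  moreover have "(\<Sum>J\<in>I. t ^ k / fact k * ((- Lam J) ^ k * (Phi J x * Phi J y * w y)))
      = t ^ k / fact k * kpow X G k x y" for k
    using kpow_spectral[OF compl eigen x y, of k] by (simp add: sum_distrib_left mult.assoc)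
  ultimately show ?thesis unfolding heat_def by (simp add: sums_iff)
qed

lemma orthonormal_sum_sq:
  fixes Phi :: "'j \<Rightarrow> 'x \<Rightarrow> real" and w :: "'x \<Rightarrow> real"
  assumes fI: "finite I'" and sub: "I' \<subseteq> I"
    and orth: "\<forall>J\<in>I. \<forall>K\<in>I. (\<Sum>x\<in>X. w x * Phi J x * Phi K x) = (if J = K then 1 else 0)"
  shows "(\<Sum>y\<in>X. w y * (\<Sum>J\<in>I'. c J * Phi J y)\<^sup>2) = (\<Sum>J\<in>I'. (c J)\<^sup>2)"
proof -
  have "(\<Sum>y\<in>X. w y * (\<Sum>J\<in>I'. c J * Phi J y)\<^sup>2)
      = (\<Sum>J\<in>I'. \<Sum>K\<in>I'. c J * c K * (\<Sum>y\<in>X. w y * Phi J y * Phi K y))"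
    unfolding power2_eq_square sum_product
    by (simp add: sum_distrib_left sum.swap[of _ X] mult_ac)
  also have "\<dots> = (\<Sum>J\<in>I'. \<Sum>K\<in>I'. if J = K then c J * c K else 0)"
  proof (intro sum.cong refl)
    fix J K assume "J \<in> I'" "K \<in> I'"
    hence "(\<Sum>y\<in>X. w y * Phi J y * Phi K y) = (if J = K then 1 else 0)" using orth sub by blast
    thus "c J * c K * (\<Sum>y\<in>X. w y * Phi J y * Phi K y) = (if J = K then c J * c K else 0)" by simp
  qed
  finally show ?thesis using fI by (simp add: power2_eq_square)
qed

lemma d2_sq_spectral:
  fixes X :: "'x set" and I :: "'j set" and Phi :: "'j \<Rightarrow> 'x \<Rightarrow> real" and w :: "'x \<Rightarrow> real"
  assumes fX: "finite X" and fI: "finite I" and cI: "card I = card X" and pos: "\<forall>x\<in>X. w x > 0"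
    and orth: "\<forall>J\<in>I. \<forall>K\<in>I. (\<Sum>x\<in>X. w x * Phi J x * Phi K x) = (if J = K then 1 else 0)"
    and eigen: "\<forall>J\<in>I. \<forall>x\<in>X. (\<Sum>y\<in>X. G x y * Phi J y) = - Lam J * Phi J x"
    and J0: "J0 \<in> I" "\<forall>x\<in>X. Phi J0 x = 1" "Lam J0 = 0"
    and mu: "sum mu X = 1"
  shows "(d2 X G w mu t)\<^sup>2 = (\<Sum>J\<in>I - {J0}. exp (- 2 * t * Lam J) * (\<Sum>x\<in>X. mu x * Phi J x)\<^sup>2)"
proof -
  have compl: "\<forall>x\<in>X. \<forall>y\<in>X. (\<Sum>J\<in>I. Phi J x * Phi J y) * w y = (if x = y then 1 else 0)"
    using orthonormal_family_complete[OF fX fI cI pos orth] by blast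
  define m where "m J = (\<Sum>x\<in>X. mu x * Phi J x)" for J
  have density: "evolve X G mu t y / w y - 1 = (\<Sum>J\<in>I - {J0}. (exp (- t * Lam J) * m J) * Phi J y)"
    if y: "y \<in> X" for y
  proof -
    have "evolve X G mu t y = (\<Sum>x\<in>X. mu x * (\<Sum>J\<in>I. exp (- t * Lam J) * (Phi J x * Phi J y * w y)))"
      unfolding evolve_def using heat_spectral[OF compl eigen _ y] by (intro sum.cong refl) auto
    also have "\<dots> = (\<Sum>J\<in>I. exp (- t * Lam J) * m J * Phi J y * w y)"
      unfolding m_def by (simp add: sum_distrib_left sum_distrib_right sum.swap[of _ X] algebra_simps)
    finally have "evolve X G mu t y / w y = (\<Sum>J\<in>I. exp (- t * Lam J) * m J * Phi J y)"
      using pos y by (simp add: sum_divide_distrib less_imp_neq[symmetric])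
    also have "\<dots> = exp (- t * Lam J0) * m J0 * Phi J0 y + (\<Sum>J\<in>I - {J0}. exp (- t * Lam J) * m J * Phi J y)"
      using J0(1) fI by (simp add: sum.remove)
    also have "exp (- t * Lam J0) * m J0 * Phi J0 y = 1"
      using J0 y mu unfolding m_def by simp
    finally show ?thesis by simp
  qed
  have "(\<Sum>y\<in>X. w y * (evolve X G mu t y / w y - 1)\<^sup>2)
      = (\<Sum>y\<in>X. w y * (\<Sum>J\<in>I - {J0}. (exp (- t * Lam J) * m J) * Phi J y)\<^sup>2)"
    using density by (intro sum.cong refl) simp
  also have "\<dots> = (\<Sum>J\<in>I - {J0}. (exp (- t * Lam J) * m J)\<^sup>2)"
    by (rule orthonormal_sum_sq[OF _ _ orth]) (use fI in auto)
  also have "\<dots> = (\<Sum>J\<in>I - {J0}. exp (- 2 * t * Lam J) * (m J)\<^sup>2)"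
    by (intro sum.cong refl) (simp add: power_mult_distrib power2_eq_square exp_add[symmetric])
  finally show ?thesis
    unfolding d2_def m_def using pos by (simp add: sum_nonneg less_imp_le)
qed

section \<open>Positivity of the nontrivial eigenvalues\<close>

lemma dirichlet_form_eigenfunction:
  fixes L :: "'a \<Rightarrow> 'a \<Rightarrow> real" and w f :: "'a \<Rightarrow> real"
  assumes rows: "\<forall>x\<in>S. (\<Sum>y\<in>S. L x y) = 0" and cols: "\<forall>y\<in>S. (\<Sum>x\<in>S. w x * L x y) = 0"
    and eigen: "\<forall>x\<in>S. (\<Sum>y\<in>S. L x y * f y) = - lam * f x"
  shows "(\<Sum>x\<in>S. \<Sum>y\<in>S. w x * L x y * (f x - f y)\<^sup>2) = 2 * lam * (\<Sum>x\<in>S. w x * (f x)\<^sup>2)"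
proof -
  have "(\<Sum>x\<in>S. \<Sum>y\<in>S. w x * L x y * (f x)\<^sup>2) = (\<Sum>x\<in>S. w x * (\<Sum>y\<in>S. L x y) * (f x)\<^sup>2)"
    by (simp add: sum_distrib_left sum_distrib_right mult.assoc)
  hence diag_x: "(\<Sum>x\<in>S. \<Sum>y\<in>S. w x * L x y * (f x)\<^sup>2) = 0" using rows by simp
  have "(\<Sum>x\<in>S. \<Sum>y\<in>S. w x * L x y * (f y)\<^sup>2) = (\<Sum>y\<in>S. (f y)\<^sup>2 * (\<Sum>x\<in>S. w x * L x y))"
    by (subst sum.swap) (simp add: sum_distrib_left mult_ac)
  hence diag_y: "(\<Sum>x\<in>S. \<Sum>y\<in>S. w x * L x y * (f y)\<^sup>2) = 0" using cols by simp
  have cross: "(\<Sum>x\<in>S. \<Sum>y\<in>S. w x * L x y * (f x * f y)) = - lam * (\<Sum>x\<in>S. w x * (f x)\<^sup>2)"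
  proof -
    have "(\<Sum>x\<in>S. \<Sum>y\<in>S. w x * L x y * (f x * f y)) = (\<Sum>x\<in>S. w x * f x * (\<Sum>y\<in>S. L x y * f y))"
      by (simp add: sum_distrib_left mult_ac)
    also have "\<dots> = (\<Sum>x\<in>S. - lam * (w x * (f x)\<^sup>2))"
      using eigen by (intro sum.cong refl) (simp add: power2_eq_square mult_ac)
    finally show ?thesis by (simp add: sum_distrib_left)
  qed
  have "(\<Sum>x\<in>S. \<Sum>y\<in>S. w x * L x y * (f x - f y)\<^sup>2)
      = (\<Sum>x\<in>S. \<Sum>y\<in>S. w x * L x y * (f x)\<^sup>2) - 2 * (\<Sum>x\<in>S. \<Sum>y\<in>S. w x * L x y * (f x * f y))
        + (\<Sum>x\<in>S. \<Sum>y\<in>S. w x * L x y * (f y)\<^sup>2)"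
    by (simp add: power2_eq_square sum.distrib sum_subtractf sum_distrib_left algebra_simps)
  thus ?thesis using diag_x diag_y cross by simp
qed

lemma irreducible_dirichlet_zero_imp_constant:
  fixes L :: "'a \<Rightarrow> 'a \<Rightarrow> real" and w f :: "'a \<Rightarrow> real"
  assumes fS: "finite S" and gen: "is_generator S L" and irr: "irreducible_gen S L"
    and pos: "\<forall>x\<in>S. w x > 0"
    and zero: "(\<Sum>x\<in>S. \<Sum>y\<in>S. w x * L x y * (f x - f y)\<^sup>2) \<le> 0"
    and x: "x \<in> S" and y: "y \<in> S"
  shows "f x = f y"
proof -
  have nonneg: "w u * L u v * (f u - f v)\<^sup>2 \<ge> 0" if "u \<in> S" "v \<in> S" for u v
    using gen pos that unfolding is_generator_def by (cases "u = v") auto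
  have vanish: "w u * L u v * (f u - f v)\<^sup>2 = 0" if "u \<in> S" "v \<in> S" for u v
  proof -
    have "(\<Sum>x\<in>S. \<Sum>y\<in>S. w x * L x y * (f x - f y)\<^sup>2) \<ge> 0"
      using nonneg by (simp add: sum_nonneg)
    hence "(\<Sum>x\<in>S. \<Sum>y\<in>S. w x * L x y * (f x - f y)\<^sup>2) = 0" using zero by linarith
    hence "(\<Sum>y\<in>S. w u * L u y * (f u - f y)\<^sup>2) = 0"
      using fS nonneg \<open>u \<in> S\<close> by (subst (asm) sum_nonneg_eq_0_iff) (auto intro: sum_nonneg)
    thus ?thesis using fS nonneg that by (subst (asm) sum_nonneg_eq_0_iff) auto
  qed
  have edge: "f u = f v" if "(u, v) \<in> {(u, v). u \<in> S \<and> v \<in> S \<and> u \<noteq> v \<and> L u v > 0}" for u v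
    using that vanish[of u v] pos by auto
  have "(x, y) \<in> {(u, v). u \<in> S \<and> v \<in> S \<and> u \<noteq> v \<and> L u v > 0}\<^sup>*"
    using irr x y unfolding irreducible_gen_def by blast
  thus ?thesis
  proof (induction rule: rtrancl_induct)
    case (step u v)
    thus ?case using edge[of u v] by simp
  qed simp
qed

lemma eigenvalue_pos:
  assumes ch: "finite_irred_chain S L w"
    and eig: "orthonormal_eigendata S L w lam phi"
    and j: "1 \<le> j" "j < card S"
  shows "lam j > 0"
proof (rule ccontr)
  assume "\<not> lam j > 0"
  have fS: "finite S" and gen: "is_generator S L" and irr: "irreducible_gen S L"
    and st: "stationary S L w"
    using ch unfolding finite_irred_chain_def by auto
  have pos: "\<forall>x\<in>S. w x > 0" and cols: "\<forall>y\<in>S. (\<Sum>x\<in>S. w x * L x y) = 0" and wsum: "sum w S = 1"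
    using st unfolding stationary_def by auto
  have rows: "\<forall>x\<in>S. (\<Sum>y\<in>S. L x y) = 0" using gen unfolding is_generator_def by auto
  have eigen: "\<forall>x\<in>S. (\<Sum>y\<in>S. L x y * phi j y) = - lam j * phi j x"
    and norm: "(\<Sum>x\<in>S. w x * phi j x * phi j x) = 1"
    and orth: "\<forall>j<card S. \<forall>k<card S. (\<Sum>x\<in>S. w x * phi j x * phi k x) = (if j = k then 1 else 0)"
    and phi0: "\<forall>x\<in>S. phi 0 x = 1"
    using eig j unfolding orthonormal_eigendata_def by auto
  have orth0: "(\<Sum>x\<in>S. w x * phi 0 x * phi j x) = 0" using orth[rule_format, of 0 j] j by simp
  have "(\<Sum>x\<in>S. \<Sum>y\<in>S. w x * L x y * (phi j x - phi j y)\<^sup>2) = 2 * lam j"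
    using dirichlet_form_eigenfunction[OF rows cols eigen] norm
    by (simp add: power2_eq_square mult.assoc)
  hence "(\<Sum>x\<in>S. \<Sum>y\<in>S. w x * L x y * (phi j x - phi j y)\<^sup>2) \<le> 0"
    using \<open>\<not> lam j > 0\<close> by simp
  note const = irreducible_dirichlet_zero_imp_constant[OF fS gen irr pos this]
  have "S \<noteq> {}" using j by auto
  then obtain x0 where x0: "x0 \<in> S" by blast
  have "\<forall>x\<in>S. phi j x = phi j x0" using const x0 by blast
  then obtain c where c: "\<forall>x\<in>S. phi j x = c" by blast
  have "c = 0" using orth0 phi0 c wsum by (simp add: sum_distrib_right[symmetric])
  thus False using norm c by simp
qed

section \<open>Tensor-product eigenfunctions of a product chain\<close>

lemma prod_indicator_eq:
  fixes x y :: "nat \<Rightarrow> 'a"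
  assumes "finite K"
  shows "(\<Prod>j\<in>K. (if x j = y j then 1 else 0) :: real) = (if \<forall>j\<in>K. x j = y j then 1 else 0)"
  using assms by (induction K rule: finite_induct) auto

lemma sum_PiE_coordinate_fiber:
  fixes g :: "(nat \<Rightarrow> 'a) \<Rightarrow> real"
  assumes x: "x \<in> PiE {..<l} S" and i: "i < l" and finS: "\<forall>i<l. finite (S i)"
  shows "(\<Sum>y\<in>PiE {..<l} S. g y * (\<Prod>j\<in>{..<l} - {i}. (if x j = y j then 1 else 0)))
       = (\<Sum>u\<in>S i. g (x(i := u)))"
proof -
  have fiber: "{y \<in> PiE {..<l} S. \<forall>j\<in>{..<l} - {i}. x j = y j} = (\<lambda>u. x(i := u)) ` S i"
  proof (intro equalityI subsetI)
    fix y assume y: "y \<in> {y \<in> PiE {..<l} S. \<forall>j\<in>{..<l} - {i}. x j = y j}"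
    have "y = x(i := y i)"
    proof
      fix j show "y j = (x(i := y i)) j"
        using y x i by (cases "j < l") (auto simp: PiE_def extensional_def)
    qed
    moreover have "y i \<in> S i" using y i by (auto simp: PiE_def Pi_def)
    ultimately show "y \<in> (\<lambda>u. x(i := u)) ` S i" by blast
  next
    fix y assume "y \<in> (\<lambda>u. x(i := u)) ` S i"
    then obtain u where "u \<in> S i" "y = x(i := u)" by blast
    thus "y \<in> {y \<in> PiE {..<l} S. \<forall>j\<in>{..<l} - {i}. x j = y j}"
      using x i by (auto simp: PiE_def Pi_def extensional_def)
  qed
  have "(\<Sum>y\<in>PiE {..<l} S. g y * (\<Prod>j\<in>{..<l} - {i}. (if x j = y j then 1 else 0)))
      = (\<Sum>y\<in>PiE {..<l} S. if \<forall>j\<in>{..<l} - {i}. x j = y j then g y else 0)"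
    by (intro sum.cong refl) (simp add: prod_indicator_eq)
  also have "\<dots> = (\<Sum>y\<in>{y \<in> PiE {..<l} S. \<forall>j\<in>{..<l} - {i}. x j = y j}. g y)"
    using finS by (intro sum.inter_filter[symmetric] finite_PiE) auto
  also have "\<dots> = (\<Sum>u\<in>S i. g (x(i := u)))"
    unfolding fiber by (subst sum.reindex) (auto simp: inj_on_def dest: fun_cong[where x = i])
  finally show ?thesis .
qed

lemma prod_gen_tensor_eigenfunction:
  fixes S :: "nat \<Rightarrow> 'a set" and L :: "nat \<Rightarrow> 'a \<Rightarrow> 'a \<Rightarrow> real"
    and phi :: "nat \<Rightarrow> nat \<Rightarrow> 'a \<Rightarrow> real" and lam :: "nat \<Rightarrow> nat \<Rightarrow> real"
  assumes eig: "\<And>i. i < l \<Longrightarrow> \<forall>j<card (S i). \<forall>x\<in>S i. (\<Sum>y\<in>S i. L i x y * phi i j y) = - lam i j * phi i j x"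
    and J: "J \<in> PiE {..<l} (\<lambda>i. {..<card (S i)})" and x: "x \<in> PiE {..<l} S"
    and finS: "\<forall>i<l. finite (S i)"
  shows "(\<Sum>y\<in>PiE {..<l} S. prod_gen l p L x y * (\<Prod>i<l. phi i (J i) (y i)))
       = - (\<Sum>i<l. p i * lam i (J i)) * (\<Prod>i<l. phi i (J i) (x i))"
proof -
  have coordinate: "(\<Sum>y\<in>PiE {..<l} S. (L i (x i) (y i) * (\<Prod>k<l. phi k (J k) (y k)))
           * (\<Prod>j\<in>{..<l} - {i}. (if x j = y j then 1 else 0)))
        = - lam i (J i) * (\<Prod>k<l. phi k (J k) (x k))" if i: "i < l" for i
  proof -
    have JI: "J i < card (S i)" and xi: "x i \<in> S i"
      using J x i by (auto simp: PiE_def Pi_def)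
    define R where "R = (\<Prod>k\<in>{..<l} - {i}. phi k (J k) (x k))"
    have split: "(\<Prod>k<l. phi k (J k) (z k)) = phi i (J i) (z i) * (\<Prod>k\<in>{..<l} - {i}. phi k (J k) (z k))" for z
      using i by (subst prod.remove[of _ i]) auto
    have "(\<Sum>y\<in>PiE {..<l} S. (L i (x i) (y i) * (\<Prod>k<l. phi k (J k) (y k)))
           * (\<Prod>j\<in>{..<l} - {i}. (if x j = y j then 1 else 0)))
        = (\<Sum>u\<in>S i. L i (x i) ((x(i := u)) i) * (\<Prod>k<l. phi k (J k) ((x(i := u)) k)))"
      by (rule sum_PiE_coordinate_fiber[OF x i finS])
    also have "\<dots> = (\<Sum>u\<in>S i. L i (x i) u * phi i (J i) u) * R"
      unfolding split R_def sum_distrib_right by (intro sum.cong refl prod.cong) auto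
    also have "\<dots> = - lam i (J i) * (\<Prod>k<l. phi k (J k) (x k))"
      using eig[OF i] JI xi by (simp add: split R_def)
    finally show ?thesis .
  qed
  have "(\<Sum>y\<in>PiE {..<l} S. prod_gen l p L x y * (\<Prod>i<l. phi i (J i) (y i)))
      = (\<Sum>i<l. p i * (\<Sum>y\<in>PiE {..<l} S. (L i (x i) (y i) * (\<Prod>k<l. phi k (J k) (y k)))
           * (\<Prod>j\<in>{..<l} - {i}. (if x j = y j then 1 else 0))))"
    unfolding prod_gen_def sum_distrib_right sum_distrib_left
    by (subst sum.swap) (intro sum.cong refl, simp add: mult_ac)
  also have "\<dots> = (\<Sum>i<l. p i * (- lam i (J i) * (\<Prod>k<l. phi k (J k) (x k))))"
    by (intro sum.cong refl) (simp only: coordinate lessThan_iff)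
  also have "\<dots> = - (\<Sum>i<l. p i * lam i (J i)) * (\<Prod>i<l. phi i (J i) (x i))"
    by (simp add: sum_distrib_right sum_negf mult.assoc)
  finally show ?thesis .
qed

lemma tensor_orthonormal:
  fixes w :: "nat \<Rightarrow> 'a \<Rightarrow> real" and phi :: "nat \<Rightarrow> nat \<Rightarrow> 'a \<Rightarrow> real"
  assumes finS: "\<forall>i<l. finite (S i)"
    and orth: "\<And>i. i < l \<Longrightarrow> \<forall>j<card (S i). \<forall>k<card (S i).
                 (\<Sum>x\<in>S i. w i x * phi i j x * phi i k x) = (if j = k then 1 else 0)"
    and J: "J \<in> PiE {..<l} (\<lambda>i. {..<card (S i)})" and K: "K \<in> PiE {..<l} (\<lambda>i. {..<card (S i)})"
  shows "(\<Sum>x\<in>PiE {..<l} S. prod_measure l w x * (\<Prod>i<l. phi i (J i) (x i)) * (\<Prod>i<l. phi i (K i) (x i)))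
       = (if J = K then 1 else 0)"
proof -
  have "(\<Sum>x\<in>PiE {..<l} S. prod_measure l w x * (\<Prod>i<l. phi i (J i) (x i)) * (\<Prod>i<l. phi i (K i) (x i)))
      = (\<Prod>i<l. \<Sum>u\<in>S i. w i u * phi i (J i) u * phi i (K i) u)"
    unfolding prod_measure_def prod.distrib[symmetric]
    by (rule prod_sum_PiE[symmetric]) (use finS in auto)
  also have "\<dots> = (\<Prod>i<l. if J i = K i then 1 else 0)"
    using J K orth by (intro prod.cong refl) (auto simp: PiE_def Pi_def)
  also have "\<dots> = (if J = K then 1 else 0)"
  proof (cases "J = K")
    case False
    then obtain i where "J i \<noteq> K i" by auto
    moreover have "i < l"
    proof (rule ccontr)
      assume "\<not> i < l"
      hence "J i = undefined" "K i = undefined" using J K by (auto simp: PiE_def extensional_def)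
      thus False using \<open>J i \<noteq> K i\<close> by simp
    qed
    ultimately have "(\<Prod>i<l. if J i = K i then 1 else (0::real)) = 0"
      by (subst prod_zero_iff) auto
    thus ?thesis using False by simp
  qed simp
  finally show ?thesis .
qed

lemma sum_PiE_minus_zero_prod:
  fixes h :: "nat \<Rightarrow> nat \<Rightarrow> real"
  assumes m: "\<forall>i<l. 0 < m i" and h0: "\<forall>i<l. h i 0 = 1"
  shows "(\<Sum>J\<in>PiE {..<l} (\<lambda>i. {..<m i}) - {restrict (\<lambda>i. 0) {..<l}}. \<Prod>i<l. h i (J i))
    = (\<Prod>i<l. 1 + (\<Sum>j\<in>{1..<m i}. h i j)) - 1"
proof -
  have "(\<Sum>J\<in>PiE {..<l} (\<lambda>i. {..<m i}). \<Prod>i<l. h i (J i)) = (\<Prod>i<l. \<Sum>j<m i. h i j)"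
    by (rule prod_sum_PiE[symmetric]) auto
  also have "\<dots> = (\<Prod>i<l. 1 + (\<Sum>j\<in>{1..<m i}. h i j))"
    using m h0 by (intro prod.cong refl) (simp add: lessThan_atLeast0 sum.atLeast_Suc_lessThan)
  finally have all: "(\<Sum>J\<in>PiE {..<l} (\<lambda>i. {..<m i}). \<Prod>i<l. h i (J i))
      = (\<Prod>i<l. 1 + (\<Sum>j\<in>{1..<m i}. h i j))" .
  have "restrict (\<lambda>i. 0) {..<l} \<in> PiE {..<l} (\<lambda>i. {..<m i})" using m by auto
  moreover have "(\<Prod>i<l. h i (restrict (\<lambda>i. 0) {..<l} i)) = 1" using h0 by simp
  ultimately show ?thesis
    using all sum_diff1[OF finite_PiE, of "{..<l}" "\<lambda>i. {..<m i}" "\<lambda>J. \<Prod>i<l. h i (J i)"] by simp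
qed

text \<open>The eigenvalues of the product generator are the sums \<open>\<Sum>\<^sub>i p\<^sub>i \<lambda>\<^sub>i\<^sub>,\<^sub>J\<^sub>i\<close>, so its
  spectral weight at time \<open>t\<close> factorises over the coordinates.\<close>

lemma prod_d2_sq_eq:
  fixes S :: "nat \<Rightarrow> 'a set" and L :: "nat \<Rightarrow> 'a \<Rightarrow> 'a \<Rightarrow> real"
    and w mu :: "nat \<Rightarrow> 'a \<Rightarrow> real" and p :: "nat \<Rightarrow> real"
    and phi :: "nat \<Rightarrow> nat \<Rightarrow> 'a \<Rightarrow> real" and lam :: "nat \<Rightarrow> nat \<Rightarrow> real"
  assumes chains: "\<And>i. i < l \<Longrightarrow> finite_irred_chain (S i) (L i) (w i)"
    and init: "\<And>i. i < l \<Longrightarrow> is_distribution (S i) (mu i)"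
    and eig: "\<And>i. i < l \<Longrightarrow> orthonormal_eigendata (S i) (L i) (w i) (lam i) (phi i)"
  shows "(prod_d2 l S p L w mu t)\<^sup>2 =
    (\<Prod>i<l. 1 + (\<Sum>j\<in>{1..<card (S i)}. exp (- 2 * t * (p i * lam i j)) * (\<Sum>u\<in>S i. mu i u * phi i j u)\<^sup>2)) - 1"
proof -
  define X where "X = PiE {..<l} S"
  define I where "I = PiE {..<l} (\<lambda>i. {..<card (S i)})"
  define Phi where "Phi J x = (\<Prod>i<l. phi i (J i) (x i))" for J :: "nat \<Rightarrow> nat" and x :: "nat \<Rightarrow> 'a"
  define Lam where "Lam J = (\<Sum>i<l. p i * lam i (J i))" for J :: "nat \<Rightarrow> nat"
  define J0 where "J0 = restrict (\<lambda>i. 0::nat) {..<l}"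
  define h where "h i j = exp (- 2 * t * (p i * lam i j)) * (\<Sum>u\<in>S i. mu i u * phi i j u)\<^sup>2" for i j
  have finS: "\<forall>i<l. finite (S i)" and neS: "\<forall>i<l. S i \<noteq> {}"
    and wpos: "\<forall>i<l. \<forall>u\<in>S i. w i u > 0"
    using chains unfolding finite_irred_chain_def stationary_def by auto
  have musum: "\<forall>i<l. sum (mu i) (S i) = 1" using init unfolding is_distribution_def by auto
  have eigd: "\<forall>i<l. lam i 0 = 0 \<and> (\<forall>x\<in>S i. phi i 0 x = 1) \<and>
     (\<forall>j<card (S i). \<forall>x\<in>S i. (\<Sum>y\<in>S i. L i x y * phi i j y) = - lam i j * phi i j x) \<and>
     (\<forall>j<card (S i). \<forall>k<card (S i). (\<Sum>x\<in>S i. w i x * phi i j x * phi i k x) = (if j = k then 1 else 0))"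
    using eig unfolding orthonormal_eigendata_def by auto
  have cpos: "\<forall>i<l. card (S i) > 0" using finS neS by (simp add: card_gt_0_iff)
  have fI: "finite I" unfolding I_def by (intro finite_PiE) auto
  have J0I: "J0 \<in> I" unfolding J0_def I_def using cpos by auto
  have factor: "exp (- 2 * t * Lam J) * (\<Sum>x\<in>X. prod_measure l mu x * Phi J x)\<^sup>2 = (\<Prod>i<l. h i (J i))" for J
  proof -
    have "(\<Sum>x\<in>X. prod_measure l mu x * Phi J x) = (\<Prod>i<l. \<Sum>u\<in>S i. mu i u * phi i (J i) u)"
      unfolding X_def prod_measure_def Phi_def prod.distrib[symmetric]
      by (rule prod_sum_PiE[symmetric]) (use finS in auto)
    moreover have "exp (- 2 * t * Lam J) = (\<Prod>i<l. exp (- 2 * t * (p i * lam i (J i))))"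
      unfolding Lam_def by (simp add: sum_distrib_left exp_sum)
    ultimately show ?thesis unfolding h_def by (simp add: prod.distrib prod_power_distrib)
  qed
  have "(d2 X (prod_gen l p L) (prod_measure l w) (prod_measure l mu) t)\<^sup>2 =
     (\<Sum>J\<in>I - {J0}. exp (- 2 * t * Lam J) * (\<Sum>x\<in>X. prod_measure l mu x * Phi J x)\<^sup>2)"
  proof (rule d2_sq_spectral)
    show "finite X" unfolding X_def using finS by (intro finite_PiE) auto
    show "card I = card X" unfolding I_def X_def using finS by (simp add: card_PiE)
    show "\<forall>x\<in>X. prod_measure l w x > 0"
      unfolding X_def prod_measure_def using wpos by (auto intro!: prod_pos simp: PiE_def Pi_def)
    show "\<forall>J\<in>I. \<forall>K\<in>I. (\<Sum>x\<in>X. prod_measure l w x * Phi J x * Phi K x) = (if J = K then 1 else 0)"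
      unfolding X_def I_def Phi_def using finS eigd by (intro ballI tensor_orthonormal) auto
    show "\<forall>J\<in>I. \<forall>x\<in>X. (\<Sum>y\<in>X. prod_gen l p L x y * Phi J y) = - Lam J * Phi J x"
      unfolding X_def I_def Phi_def Lam_def using eigd finS by (intro ballI prod_gen_tensor_eigenfunction) auto
    show "\<forall>x\<in>X. Phi J0 x = 1" unfolding Phi_def J0_def X_def using eigd by (auto simp: PiE_def Pi_def)
    show "Lam J0 = 0" unfolding Lam_def J0_def using eigd by simp
    show "sum (prod_measure l mu) X = 1"
      unfolding X_def prod_measure_def using finS musum by (subst prod_sum_PiE[symmetric]) auto
  qed (use fI J0I in auto)
  also have "\<dots> = (\<Sum>J\<in>I - {J0}. \<Prod>i<l. h i (J i))"
    using factor by simp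
  also have "\<dots> = (\<Prod>i<l. 1 + (\<Sum>j\<in>{1..<card (S i)}. h i j)) - 1"
    unfolding I_def J0_def using cpos eigd musum by (intro sum_PiE_minus_zero_prod) (auto simp: h_def)
  finally show ?thesis unfolding prod_d2_def prod_space_def X_def h_def .
qed

lemma sum_le_prod_one_plus:
  fixes x :: "'i \<Rightarrow> real"
  assumes "finite I" "\<forall>i\<in>I. x i \<ge> 0"
  shows "sum x I \<le> (\<Prod>i\<in>I. 1 + x i) - 1"
  using assms
proof (induction I rule: finite_induct)
  case (insert a F)
  hence IH: "sum x F \<le> (\<Prod>i\<in>F. 1 + x i) - 1" and "x a \<ge> 0" "sum x F \<ge> 0"
    by (auto intro: sum_nonneg)
  hence "x a + sum x F \<le> (1 + x a) * (1 + sum x F) - 1" by (simp add: algebra_simps)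
  also have "\<dots> \<le> (1 + x a) * (\<Prod>i\<in>F. 1 + x i) - 1"
    using IH \<open>x a \<ge> 0\<close> by (simp add: mult_left_mono)
  finally show ?case using insert by simp
qed simp

lemma prod_one_plus_le_exp_sum:
  fixes x :: "'i \<Rightarrow> real"
  assumes "finite I" "\<forall>i\<in>I. x i \<ge> 0"
  shows "(\<Prod>i\<in>I. 1 + x i) \<le> exp (sum x I)"
proof -
  have "(\<Prod>i\<in>I. 1 + x i) \<le> (\<Prod>i\<in>I. exp (x i))"
    using assms by (intro prod_mono) auto
  thus ?thesis using assms by (simp add: exp_sum)
qed

section \<open>Decay sums along a sorted spectrum\<close>

lemma exp_weighted_difference_le:
  fixes s t x :: real
  assumes s: "0 < s" and st: "s \<le> t" and x: "0 \<le> x"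
  shows "t * exp (- s * x) - s * exp (- t * x) \<le> t - s"
proof -
  define g where "g y = t * exp (- s * y) - s * exp (- t * y)" for y
  have "g x \<le> g 0"
  proof (rule DERIV_nonpos_imp_nonincreasing[OF x])
    fix y assume y: "0 \<le> y" "y \<le> x"
    have "DERIV g y :> s * t * (exp (- t * y) - exp (- s * y))"
      unfolding g_def by (auto intro!: derivative_eq_intros simp: algebra_simps)
    moreover have "s * t * (exp (- t * y) - exp (- s * y)) \<le> 0"
      using s st y by (intro mult_nonneg_nonpos) (auto simp: mult_right_mono)
    ultimately show "\<exists>d. DERIV g y :> d \<and> d \<le> 0" by blast
  qed
  thus ?thesis unfolding g_def by simp
qed

lemma exp_increment_le:
  fixes s t u v :: real
  assumes s: "0 < s" and st: "s \<le> t" and uv: "u \<le> v"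
  shows "exp (2 * (t - s) * u) * (exp (- 2 * t * u) - exp (- 2 * t * v))
    \<le> t / s * (exp (- 2 * s * u) - exp (- 2 * s * v))"
proof -
  define x where "x = 2 * (v - u)"
  have "s * (1 - exp (- t * x)) \<le> t * (1 - exp (- s * x))"
    using exp_weighted_difference_le[OF s st, of x] uv unfolding x_def by (simp add: algebra_simps)
  hence "exp (- 2 * s * u) * (1 - exp (- t * x)) \<le> exp (- 2 * s * u) * (t / s * (1 - exp (- s * x)))"
    using s by (intro mult_left_mono) (auto simp: field_simps)
  moreover have "exp (2 * (t - s) * u) * (exp (- 2 * t * u) - exp (- 2 * t * v))
      = exp (- 2 * s * u) * (1 - exp (- t * x))"
    unfolding x_def by (simp add: algebra_simps exp_add[symmetric])
  moreover have "exp (- 2 * s * u) * (1 - exp (- s * x)) = exp (- 2 * s * u) - exp (- 2 * s * v)"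
    unfolding x_def by (simp add: algebra_simps exp_add[symmetric])
  ultimately show ?thesis by (simp add: algebra_simps)
qed

lemma sum_atLeastAtMost_split:
  fixes f :: "nat \<Rightarrow> real"
  assumes "1 \<le> l" "l \<le> m" "m \<le> Suc N"
  shows "(\<Sum>k=l..N. f k) = (\<Sum>k=l..m-1. f k) + (\<Sum>k=m..N. f k)"
proof -
  have "{l..N} = {l..m-1} \<union> {m..N}" and "{l..m-1} \<inter> {m..N} = {}" using assms by auto
  thus ?thesis by (simp add: sum.union_disjoint)
qed

text \<open>In the theorem \<open>a\<^sub>k = \<psi>\<^sub>k\<^sup>2\<close> and \<open>r\<^sub>k = \<rho>\<^sub>k\<close>; then \<open>crosses\<close>, \<open>first_crossing\<close> and
  \<open>crossing_time\<close> are the paper's "\<open>j(c)\<close> is defined", \<open>j(c)\<close> and \<open>\<tau>(c)\<close>.\<close>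

definition cumsum :: "(nat \<Rightarrow> real) \<Rightarrow> nat \<Rightarrow> real" where
  "cumsum a j = (\<Sum>k=1..j. a k)"

definition crosses :: "nat \<Rightarrow> (nat \<Rightarrow> real) \<Rightarrow> real \<Rightarrow> bool" where
  "crosses N a c \<longleftrightarrow> (\<exists>j. 1 \<le> j \<and> j \<le> N \<and> cumsum a j > c)"

definition first_crossing :: "nat \<Rightarrow> (nat \<Rightarrow> real) \<Rightarrow> real \<Rightarrow> nat" where
  "first_crossing N a c = (LEAST j. 1 \<le> j \<and> j \<le> N \<and> cumsum a j > c)"

definition crossing_time :: "nat \<Rightarrow> (nat \<Rightarrow> real) \<Rightarrow> (nat \<Rightarrow> real) \<Rightarrow> real \<Rightarrow> real" where
  "crossing_time N a r c = Max ((\<lambda>j. ln (1 + cumsum a j) / (2 * r j)) ` {first_crossing N a c..N})"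

definition decay_sum :: "nat \<Rightarrow> (nat \<Rightarrow> real) \<Rightarrow> (nat \<Rightarrow> real) \<Rightarrow> real \<Rightarrow> real" where
  "decay_sum N a r t = (\<Sum>k=1..N. a k * exp (- 2 * t * r k))"

definition sorted_spectrum :: "nat \<Rightarrow> (nat \<Rightarrow> real) \<Rightarrow> (nat \<Rightarrow> real) \<Rightarrow> bool" where
  "sorted_spectrum N a r \<longleftrightarrow> (\<forall>k. 1 \<le> k \<longrightarrow> k \<le> N \<longrightarrow> a k \<ge> 0 \<and> r k > 0) \<and>
     (\<forall>i j. 1 \<le> i \<longrightarrow> i \<le> j \<longrightarrow> j \<le> N \<longrightarrow> r i \<le> r j)"

lemma first_crossingD:
  assumes "crosses N a c"
  shows "1 \<le> first_crossing N a c" "first_crossing N a c \<le> N" "cumsum a (first_crossing N a c) > c"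
    and "\<And>j. j < first_crossing N a c \<Longrightarrow> 1 \<le> j \<Longrightarrow> cumsum a j \<le> c"
proof -
  obtain j0 where j0: "1 \<le> j0 \<and> j0 \<le> N \<and> cumsum a j0 > c" using assms unfolding crosses_def by blast
  have "1 \<le> first_crossing N a c \<and> first_crossing N a c \<le> N \<and> cumsum a (first_crossing N a c) > c"
    unfolding first_crossing_def by (rule LeastI[of _ j0]) (rule j0)
  thus "1 \<le> first_crossing N a c" "first_crossing N a c \<le> N" "cumsum a (first_crossing N a c) > c"
    by auto
  fix j assume "j < first_crossing N a c" "1 \<le> j"
  thus "cumsum a j \<le> c"
    using \<open>first_crossing N a c \<le> N\<close> not_less_Least[of j] unfolding first_crossing_def by force
qed

lemma cumsum_before_first_crossing:
  assumes "crosses N a c" "c \<ge> 0"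
  shows "cumsum a (first_crossing N a c - 1) \<le> c"
  using first_crossingD[OF assms(1)] assms(2)
  by (cases "first_crossing N a c = 1") (auto simp: cumsum_def)

lemma cumsum_nonneg:
  assumes "sorted_spectrum N a r" "j \<le> N"
  shows "cumsum a j \<ge> 0"
  using assms unfolding cumsum_def sorted_spectrum_def by (intro sum_nonneg) auto

lemma crosses_antimono: "crosses N a c \<Longrightarrow> c' \<le> c \<Longrightarrow> crosses N a c'"
  unfolding crosses_def by force

lemma first_crossing_mono:
  assumes "crosses N a c" "c' \<le> c"
  shows "first_crossing N a c' \<le> first_crossing N a c"
  using first_crossingD[OF assms(1)] assms(2) unfolding first_crossing_def[of N a c']
  by (intro Least_le) auto

lemma sorted_spectrum_rate_pos: "sorted_spectrum N a r \<Longrightarrow> 1 \<le> k \<Longrightarrow> k \<le> N \<Longrightarrow> r k > 0"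
  unfolding sorted_spectrum_def by auto

lemma decay_sum_antimono:
  assumes "sorted_spectrum N a r" and "t1 \<le> t2"
  shows "decay_sum N a r t2 \<le> decay_sum N a r t1"
  using assms unfolding decay_sum_def sorted_spectrum_def
  by (intro sum_mono mult_left_mono) (auto simp: mult_right_mono)

lemma decay_sum_ge_cumsum:
  assumes sorted: "sorted_spectrum N a r" and j: "1 \<le> j" "j \<le> N" and t: "t \<ge> 0"
  shows "cumsum a j * exp (- 2 * t * r j) \<le> decay_sum N a r t"
proof -
  have "cumsum a j * exp (- 2 * t * r j) = (\<Sum>k=1..j. a k * exp (- 2 * t * r j))"
    unfolding cumsum_def by (simp add: sum_distrib_right)
  also have "\<dots> \<le> (\<Sum>k=1..j. a k * exp (- 2 * t * r k))"
    using sorted j t unfolding sorted_spectrum_def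
    by (intro sum_mono mult_left_mono) (auto simp: mult_left_mono)
  also have "\<dots> \<le> decay_sum N a r t"
    using sorted j unfolding decay_sum_def sorted_spectrum_def by (intro sum_mono2) auto
  finally show ?thesis .
qed

context
  fixes N a r c
  assumes sorted: "sorted_spectrum N a r" and crosses: "crosses N a c" and c_pos: "c > 0"
begin

lemma crossing_time_ge:
  assumes "first_crossing N a c \<le> j" "j \<le> N"
  shows "ln (1 + cumsum a j) / (2 * r j) \<le> crossing_time N a r c"
  unfolding crossing_time_def using assms by (intro Max_ge) auto

lemma cumsum_le_exp_crossing_time:
  assumes j: "first_crossing N a c \<le> j" "j \<le> N"
  shows "cumsum a j \<le> exp (2 * crossing_time N a r c * r j) - 1"
proof -
  have "r j > 0" using j first_crossingD(1)[OF crosses] by (intro sorted_spectrum_rate_pos[OF sorted]) auto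
  hence "ln (1 + cumsum a j) \<le> 2 * crossing_time N a r c * r j"
    using crossing_time_ge[OF j] by (simp add: divide_le_eq mult_ac)
  hence "exp (ln (1 + cumsum a j)) \<le> exp (2 * crossing_time N a r c * r j)" by simp
  thus ?thesis using cumsum_nonneg[OF sorted j(2)] by simp
qed

lemma crossing_time_attained:
  obtains j where "first_crossing N a c \<le> j" "j \<le> N"
    "cumsum a j = exp (2 * crossing_time N a r c * r j) - 1"
proof -
  have "crossing_time N a r c \<in> (\<lambda>j. ln (1 + cumsum a j) / (2 * r j)) ` {first_crossing N a c..N}"
    unfolding crossing_time_def using first_crossingD(2)[OF crosses] by (intro Max_in) auto
  then obtain j where j: "first_crossing N a c \<le> j" "j \<le> N"
    and tau: "crossing_time N a r c = ln (1 + cumsum a j) / (2 * r j)" by auto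
  have "r j > 0" using j first_crossingD(1)[OF crosses] by (intro sorted_spectrum_rate_pos[OF sorted]) auto
  hence "2 * crossing_time N a r c * r j = ln (1 + cumsum a j)" using tau by simp
  thus ?thesis using that[OF j] cumsum_nonneg[OF sorted j(2)] by simp
qed

lemma crossing_time_pos: "crossing_time N a r c > 0"
proof -
  note jp = first_crossingD[OF crosses]
  have "ln (1 + cumsum a (first_crossing N a c)) / (2 * r (first_crossing N a c)) > 0"
    using jp c_pos sorted_spectrum_rate_pos[OF sorted jp(1,2)] by simp
  thus ?thesis using crossing_time_ge[of "first_crossing N a c"] jp by simp
qed


lemma decay_sum_ge_threshold:
  assumes t: "t \<ge> 0"
  shows "c * exp (- 2 * t * r (first_crossing N a c)) \<le> decay_sum N a r t"
proof -
  note jp = first_crossingD[OF crosses]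
  have "c * exp (- 2 * t * r (first_crossing N a c))
      \<le> cumsum a (first_crossing N a c) * exp (- 2 * t * r (first_crossing N a c))"
    using jp by (intro mult_right_mono) auto
  also have "\<dots> \<le> decay_sum N a r t" by (rule decay_sum_ge_cumsum[OF sorted jp(1,2) t])
  finally show ?thesis .
qed

lemma decay_sum_lower_bound:
  assumes t: "t \<ge> 0"
  shows "exp (2 * (crossing_time N a r c - t) * r (first_crossing N a c)) - 1 \<le> decay_sum N a r t"
proof -
  define \<tau> where "\<tau> = crossing_time N a r c"
  define j\<^sub>c where "j\<^sub>c = first_crossing N a c"
  note jp = first_crossingD[OF crosses, folded j\<^sub>c_def]
  obtain j where j: "j\<^sub>c \<le> j" "j \<le> N" and cum: "cumsum a j = exp (2 * \<tau> * r j) - 1"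
    using crossing_time_attained unfolding \<tau>_def j\<^sub>c_def by blast
  have rj: "r j > 0" "r j\<^sub>c \<le> r j"
    using sorted j jp unfolding sorted_spectrum_def by auto
  show ?thesis
  proof (cases "\<tau> \<ge> t")
    case False
    hence "exp (2 * (\<tau> - t) * r j\<^sub>c) \<le> 1"
      using jp sorted_spectrum_rate_pos[OF sorted jp(1,2)] by (simp add: mult_nonpos_nonneg)
    moreover have "decay_sum N a r t \<ge> 0"
      using sorted unfolding decay_sum_def sorted_spectrum_def by (intro sum_nonneg) auto
    ultimately show ?thesis unfolding \<tau>_def j\<^sub>c_def by linarith
  next
    case True
    have "exp (- 2 * t * r j) \<le> 1" using t rj by simp
    moreover have "exp (2 * (\<tau> - t) * r j\<^sub>c) \<le> exp (2 * (\<tau> - t) * r j)"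
      using True rj by (simp add: mult_left_mono)
    ultimately have "exp (2 * (\<tau> - t) * r j\<^sub>c) - 1 \<le> exp (2 * (\<tau> - t) * r j) - exp (- 2 * t * r j)"
      by linarith
    also have "\<dots> = cumsum a j * exp (- 2 * t * r j)"
      unfolding cum by (simp add: algebra_simps exp_add[symmetric])
    also have "\<dots> \<le> decay_sum N a r t"
      using decay_sum_ge_cumsum[OF sorted _ j(2) t] jp j by simp
    finally show ?thesis unfolding \<tau>_def j\<^sub>c_def .
  qed
qed

lemma decay_sum_head_bound:
  assumes t: "t \<ge> 0"
  shows "(\<Sum>k=1..first_crossing N a c - 1. a k * exp (- 2 * t * r k)) \<le> c"
proof -
  have "(\<Sum>k=1..first_crossing N a c - 1. a k * exp (- 2 * t * r k)) \<le> cumsum a (first_crossing N a c - 1)"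
    unfolding cumsum_def using sorted t first_crossingD(2)[OF crosses] unfolding sorted_spectrum_def
    by (intro sum_mono mult_left_le) auto
  also have "\<dots> \<le> c" using cumsum_before_first_crossing[OF crosses] c_pos by simp
  finally show ?thesis .
qed

text \<open>Abel summation: from the first crossing on, the partial sums of \<open>a\<close> are at most
  \<open>exp (2\<tau> r\<^sub>j) - 1\<close> (\<open>\<tau>\<close> the crossing time), and \<open>exp_increment_le\<close> bounds each
  summation-by-parts increment by the matching increment of \<open>t/s \<cdot> exp (-2s r\<^sub>j)\<close>, \<open>s = t - \<tau>\<close>.\<close>

lemma decay_sum_tail_bound:
  assumes t: "t > crossing_time N a r c" and m: "first_crossing N a c \<le> m" "m \<le> N"
  shows "(\<Sum>k=m..N. a k * exp (- 2 * t * r k)) + cumsum a (m - 1) * exp (- 2 * t * r m)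
      \<le> t / (t - crossing_time N a r c) * exp (- 2 * (t - crossing_time N a r c) * r m)"
  using m(2,1)
proof (induction m rule: inc_induct)
  define \<tau> where "\<tau> = crossing_time N a r c"
  have \<tau>: "0 < \<tau>" "\<tau> < t" using crossing_time_pos t unfolding \<tau>_def by auto
  have ratio: "1 \<le> t / (t - \<tau>)" using \<tau> by simp
  note jp = first_crossingD[OF crosses]
  {
    case base
    have "(\<Sum>k=N..N. a k * exp (- 2 * t * r k)) + cumsum a (N - 1) * exp (- 2 * t * r N)
        = cumsum a N * exp (- 2 * t * r N)"
      using jp base by (cases N) (auto simp: cumsum_def algebra_simps)
    also have "\<dots> \<le> exp (2 * \<tau> * r N) * exp (- 2 * t * r N)"
      using cumsum_le_exp_crossing_time[OF base] unfolding \<tau>_def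
      by (intro mult_right_mono) auto
    also have "\<dots> = exp (- 2 * (t - \<tau>) * r N)" by (simp add: exp_add[symmetric] algebra_simps)
    also have "\<dots> \<le> t / (t - \<tau>) * exp (- 2 * (t - \<tau>) * r N)"
      using mult_right_mono[OF ratio, of "exp (- 2 * (t - \<tau>) * r N)"] by simp
    finally show ?case unfolding \<tau>_def .
  next
    case (step m)
    have mc: "first_crossing N a c \<le> m" and mN: "m < N" using step(2,4) by auto
    have IH: "(\<Sum>k=Suc m..N. a k * exp (- 2 * t * r k)) + cumsum a m * exp (- 2 * t * r (Suc m))
        \<le> t / (t - \<tau>) * exp (- 2 * (t - \<tau>) * r (Suc m))"
      using step(3) mc unfolding \<tau>_def by simp
    have m1: "1 \<le> m" using jp mc by simp
    define e where "e j = exp (- 2 * t * r j)" for j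
    have rle: "r m \<le> r (Suc m)" using sorted m1 mN unfolding sorted_spectrum_def by auto
    hence "e (Suc m) \<le> e m" using \<tau> unfolding e_def by (simp add: mult_left_mono)
    hence "cumsum a m * (e m - e (Suc m)) \<le> exp (2 * \<tau> * r m) * (e m - e (Suc m))"
      using cumsum_le_exp_crossing_time[OF mc] mN unfolding \<tau>_def
      by (intro mult_right_mono) auto
    also have "\<dots> \<le> t / (t - \<tau>) * (exp (- 2 * (t - \<tau>) * r m) - exp (- 2 * (t - \<tau>) * r (Suc m)))"
      using exp_increment_le[of "t - \<tau>" t "r m" "r (Suc m)"] \<tau> rle unfolding e_def by simp
    finally have increment: "cumsum a m * (e m - e (Suc m))
        \<le> t / (t - \<tau>) * (exp (- 2 * (t - \<tau>) * r m) - exp (- 2 * (t - \<tau>) * r (Suc m)))" .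
    have "(\<Sum>k=m..N. a k * e k) + cumsum a (m - 1) * e m
        = cumsum a m * (e m - e (Suc m)) + ((\<Sum>k=Suc m..N. a k * e k) + cumsum a (Suc m - 1) * e (Suc m))"
      using m1 mN by (cases m) (auto simp: cumsum_def sum.atLeast_Suc_atMost algebra_simps)
    also have "\<dots> \<le> t / (t - \<tau>) * exp (- 2 * (t - \<tau>) * r m)"
      using increment IH unfolding e_def
      by (simp add: algebra_simps)
    finally show ?case unfolding e_def \<tau>_def .
  }
qed

lemma decay_sum_upper_bound:
  assumes t: "t > crossing_time N a r c"
  shows "decay_sum N a r t
    \<le> c + t / (t - crossing_time N a r c) * exp (- 2 * (t - crossing_time N a r c) * r (first_crossing N a c))"
proof -
  note jp = first_crossingD[OF crosses]
  have t0: "t \<ge> 0" using t crossing_time_pos by simp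
  have "decay_sum N a r t = (\<Sum>k=1..first_crossing N a c - 1. a k * exp (- 2 * t * r k))
      + (\<Sum>k=first_crossing N a c..N. a k * exp (- 2 * t * r k))"
    unfolding decay_sum_def using jp by (intro sum_atLeastAtMost_split) auto
  moreover have "cumsum a (first_crossing N a c - 1) * exp (- 2 * t * r (first_crossing N a c)) \<ge> 0"
    using cumsum_nonneg[OF sorted, of "first_crossing N a c - 1"] jp by simp
  ultimately show ?thesis
    using decay_sum_head_bound[OF t0] decay_sum_tail_bound[OF t order_refl jp(2)] by linarith
qed

end

lemma decay_sum_upper_bound_split:
  assumes sorted: "sorted_spectrum N a r" and crosses: "crosses N a c"
    and c': "0 < c'" "c' \<le> c" and t: "t > crossing_time N a r c"
  shows "decay_sum N a r t \<le> c' + c * exp (- 2 * t * r (first_crossing N a c'))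
    + t / (t - crossing_time N a r c) * exp (- 2 * (t - crossing_time N a r c) * r (first_crossing N a c))"
proof -
  have c: "c > 0" using c' by simp
  have crosses': "crosses N a c'" using crosses_antimono[OF crosses c'(2)] .
  note jp = first_crossingD[OF crosses] and jp' = first_crossingD[OF crosses']
  define j1 where "j1 = first_crossing N a c'"
  define j2 where "j2 = first_crossing N a c"
  have j12: "j1 \<le> j2" unfolding j1_def j2_def using first_crossing_mono[OF crosses c'(2)] .
  have t0: "t \<ge> 0" using t crossing_time_pos[OF sorted crosses c] by simp
  define f where "f k = a k * exp (- 2 * t * r k)" for k
  have "decay_sum N a r t = (\<Sum>k=1..j1-1. f k) + (\<Sum>k=j1..j2-1. f k) + (\<Sum>k=j2..N. f k)"
    using jp jp' j12 sum_atLeastAtMost_split[of 1 j1 N f] sum_atLeastAtMost_split[of j1 j2 N f]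
    unfolding decay_sum_def f_def j1_def j2_def by simp
  moreover have "(\<Sum>k=1..j1-1. f k) \<le> c'"
    using decay_sum_head_bound[OF sorted crosses' c'(1) t0] unfolding f_def j1_def .
  moreover have "(\<Sum>k=j1..j2-1. f k) \<le> c * exp (- 2 * t * r j1)"
  proof -
    have "(\<Sum>k=j1..j2-1. f k) \<le> (\<Sum>k=j1..j2-1. a k * exp (- 2 * t * r j1))"
      unfolding f_def using sorted jp jp' j12 t0 unfolding sorted_spectrum_def j1_def j2_def
      by (intro sum_mono mult_left_mono) (auto simp: mult_left_mono)
    also have "\<dots> = exp (- 2 * t * r j1) * (\<Sum>k=j1..j2-1. a k)" by (simp add: sum_distrib_right mult_ac)
    also have "(\<Sum>k=j1..j2-1. a k) \<le> cumsum a (j2 - 1)"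
      unfolding cumsum_def using sorted jp jp' unfolding sorted_spectrum_def j1_def j2_def
      by (intro sum_mono2) auto
    also have "cumsum a (j2 - 1) \<le> c" using cumsum_before_first_crossing[OF crosses] c unfolding j2_def by simp
    finally show ?thesis by (simp add: mult.commute)
  qed
  moreover have "cumsum a (j2 - 1) * exp (- 2 * t * r j2) \<ge> 0"
    using cumsum_nonneg[OF sorted, of "j2 - 1"] jp unfolding j2_def by simp
  ultimately show ?thesis
    using decay_sum_tail_bound[OF sorted crosses c t order_refl jp(2)] unfolding f_def j1_def j2_def
    by linarith
qed

lemma one_plus_mult_exp_less_inverse:
  fixes x :: real assumes x: "x > 0"
  shows "(1 + x) * exp (- 2 * x) < 1 / x"
proof -
  have "(1 + x)\<^sup>2 \<le> (exp x)\<^sup>2" using x by (intro power_mono) auto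
  hence h: "(1 + x)\<^sup>2 \<le> exp (2 * x)" by (simp add: power2_eq_square exp_add[symmetric])
  have "(1 + x) * exp (- 2 * x) = (1 + x) / exp (2 * x)" by (simp add: exp_minus divide_inverse)
  also have "\<dots> \<le> (1 + x) / (1 + x)\<^sup>2" using h x by (intro divide_left_mono) auto
  also have "\<dots> = 1 / (1 + x)" using x by (simp add: power2_eq_square)
  also have "\<dots> < 1 / x" using x by (simp add: divide_strict_left_mono)
  finally show ?thesis .
qed

lemma window_decay_bound:
  fixes \<tau> \<rho> :: real
  assumes \<tau>: "0 < \<tau>" and \<rho>: "0 < \<rho>"
  defines "w \<equiv> sqrt (\<tau> / \<rho>)"
  shows "(\<tau> + w) / w * exp (- 2 * w * \<rho>) < 1 / sqrt (\<tau> * \<rho>)"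
proof -
  define x where "x = sqrt (\<tau> * \<rho>)"
  have "w > 0" "x > 0" unfolding w_def x_def using \<tau> \<rho> by auto
  moreover have "w * \<rho> = x" "\<tau> / w = x"
    unfolding w_def x_def using \<tau> \<rho> by (auto simp: real_sqrt_divide real_sqrt_mult field_simps)
  ultimately have "(\<tau> + w) / w * exp (- 2 * w * \<rho>) = (1 + x) * exp (- 2 * x)"
    by (simp add: add_divide_distrib mult.assoc)
  thus ?thesis using one_plus_mult_exp_less_inverse[OF \<open>x > 0\<close>] unfolding x_def by simp
qed

section \<open>Cutoff for distances squeezed by a decay sum\<close>

locale L2_sandwich =
  fixes N :: "nat \<Rightarrow> nat" and a r :: "nat \<Rightarrow> nat \<Rightarrow> real" and d :: "nat \<Rightarrow> real \<Rightarrow> real"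
  assumes sorted: "\<And>n. sorted_spectrum (N n) (a n) (r n)"
    and d_nonneg: "\<And>n t. d n t \<ge> 0"
    and lower: "\<And>n t. decay_sum (N n) (a n) (r n) t \<le> (d n t)\<^sup>2"
    and upper: "\<And>n t. (d n t)\<^sup>2 \<le> exp (decay_sum (N n) (a n) (r n) t) - 1"
begin

abbreviation profile where "profile n t \<equiv> decay_sum (N n) (a n) (r n) t"
abbreviation tau where "tau n c \<equiv> crossing_time (N n) (a n) (r n) c"
abbreviation rate where "rate n c \<equiv> r n (first_crossing (N n) (a n) c)"
abbreviation crossed where "crossed n c \<equiv> crosses (N n) (a n) c"

definition cutoff_criterion :: bool where
  "cutoff_criterion \<longleftrightarrow> (\<forall>c>0. eventually (\<lambda>n. crossed n c) sequentially \<and>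
     filterlim (\<lambda>n. tau n c * rate n c) at_top sequentially)"

lemma rate_pos: "crossed n c \<Longrightarrow> rate n c > 0"
  using first_crossingD(1,2) sorted_spectrum_rate_pos[OF sorted] by blast

lemma tau_pos: "crossed n c \<Longrightarrow> c > 0 \<Longrightarrow> tau n c > 0"
  using crossing_time_pos[OF sorted] .

lemma distance_lt_of_profile_lt:
  assumes "e > 0" "profile n t < ln (1 + e\<^sup>2)"
  shows "d n t < e"
proof -
  have "exp (profile n t) < 1 + e\<^sup>2"
    using assms(2) by (metis add_pos_nonneg exp_less_cancel_iff exp_ln zero_le_power2 zero_less_one)
  hence "(d n t)\<^sup>2 < e\<^sup>2" using upper[of n t] by simp
  thus ?thesis using assms(1) by (simp add: power_less_imp_less_base)
qed

lemma distance_gt_of_profile_gt: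
  assumes "e\<^sup>2 < profile n t"
  shows "e < d n t"
  using power_less_imp_less_base[OF less_le_trans[OF assms lower] d_nonneg] .

lemma profile_lt_of_distance_lt:
  assumes "d n t < e"
  shows "profile n t < e\<^sup>2"
  using lower[of n t] power_strict_mono[OF assms d_nonneg, of 2] by simp

lemma profile_gt_of_distance_ge:
  assumes "0 \<le> e" "e \<le> d n t"
  shows "ln (1 + e\<^sup>2) \<le> profile n t"
proof -
  have "1 + e\<^sup>2 \<le> exp (profile n t)"
    using upper[of n t] power_mono[OF assms(2,1), of 2] by simp
  thus ?thesis by (metis add_pos_nonneg exp_le_cancel_iff exp_ln zero_le_power2 zero_less_one)
qed

lemma profile_ge_of_rate_gap:
  assumes "crossed n c" "c > 0" "0 \<le> t"
  shows "exp (2 * ((tau n c - t) * rate n c)) - 1 \<le> profile n t"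
  using decay_sum_lower_bound[OF sorted assms] by (simp only: mult.assoc)

lemma cutoff_criterion_eventually:
  assumes cutoff_criterion "c > 0"
  shows "eventually (\<lambda>n. crossed n c \<and> M < tau n c * rate n c) sequentially"
proof (rule eventually_conj)
  show "eventually (\<lambda>n. crossed n c) sequentially" "eventually (\<lambda>n. M < tau n c * rate n c) sequentially"
    using assms unfolding cutoff_criterion_def filterlim_at_top_dense by auto
qed

lemma tau_ratio_bound:
  assumes crit: cutoff_criterion and c: "c > 0" and c': "c' > 0" and b: "0 < b" "b < 1"
  shows "eventually (\<lambda>n. (1 - b) * tau n c' < (1 + b) * tau n c) sequentially"
proof -
  define B where "B = c + (1 + b) / b"
  show ?thesis
    using cutoff_criterion_eventually[OF crit c', of "ln (B + 1) / (2 * b)"]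
      cutoff_criterion_eventually[OF crit c, of 0]
  proof eventually_elim
    fix n assume "crossed n c' \<and> ln (B + 1) / (2 * b) < tau n c' * rate n c'" "crossed n c \<and> 0 < tau n c * rate n c"
    hence crossed': "crossed n c'" and crossed: "crossed n c"
      and big: "ln (B + 1) < 2 * ((tau n c' - (1 - b) * tau n c') * rate n c')"
      using b by (auto simp: field_simps)
    have "0 < B + 1" using b c unfolding B_def by (simp add: add_pos_pos)
    hence "B + 1 < exp (2 * ((tau n c' - (1 - b) * tau n c') * rate n c'))"
      using exp_less_mono[OF big] by simp
    moreover have "exp (2 * ((tau n c' - (1 - b) * tau n c') * rate n c')) - 1 \<le> profile n ((1 - b) * tau n c')"
      using profile_ge_of_rate_gap[OF crossed' c'] tau_pos[OF crossed' c'] b by simp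
    ultimately have large: "B < profile n ((1 - b) * tau n c')" by linarith
    show "(1 - b) * tau n c' < (1 + b) * tau n c"
    proof (rule ccontr)
      assume "\<not> (1 - b) * tau n c' < (1 + b) * tau n c"
      hence "profile n ((1 - b) * tau n c') \<le> profile n ((1 + b) * tau n c)"
        by (intro decay_sum_antimono[OF sorted]) simp
      also have "\<dots> \<le> c + (1 + b) * tau n c / ((1 + b) * tau n c - tau n c)
          * exp (- 2 * ((1 + b) * tau n c - tau n c) * rate n c)"
        by (rule decay_sum_upper_bound[OF sorted crossed c]) (use tau_pos[OF crossed c] b in simp)
      also have "\<dots> = c + (1 + b) / b * exp (- 2 * (b * tau n c) * rate n c)"
      proof -
        have "(1 + b) * tau n c - tau n c = b * tau n c" by (simp add: algebra_simps)
        thus ?thesis using tau_pos[OF crossed c] b by simp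
      qed
      also have "\<dots> \<le> B"
        using tau_pos[OF crossed c] rate_pos[OF crossed] b unfolding B_def
        by (intro add_left_mono mult_left_le) auto
      finally show False using large by simp
    qed
  qed
qed

lemma profile_small_after_tau:
  assumes crit: cutoff_criterion and c: "c > 0" and al: "0 < al" "al < 1" and e: "e > 0"
  shows "eventually (\<lambda>n. profile n ((1 + al) * tau n c) < e) sequentially"
proof -
  text \<open>Compare with the smaller threshold \<open>c' \<le> e/2\<close>: eventually \<open>(1 + al)\<tau>(c)\<close> exceeds
    \<open>(1 + al/3)\<tau>(c')\<close>, where the decay sum is at most \<open>c' + K exp (-2(al/3) \<tau>(c') \<rho>')\<close>.\<close>
  define c' where "c' = min c (e / 2)"
  have c': "0 < c'" "c' \<le> e / 2" unfolding c'_def using c e by auto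
  define b where "b = al / 5"
  define K where "K = (1 + al / 3) / (al / 3)"
  have K: "K > 0" unfolding K_def using al by simp
  define M where "M = ln (2 * K / e) * 3 / (2 * al)"
  have b: "0 < b" "b < 1" using al unfolding b_def by auto
  show ?thesis
    using tau_ratio_bound[OF crit c c'(1) b] cutoff_criterion_eventually[OF crit c'(1), of M]
      cutoff_criterion_eventually[OF crit c, of 0]
  proof eventually_elim
    fix n assume "(1 - b) * tau n c' < (1 + b) * tau n c" "crossed n c' \<and> M < tau n c' * rate n c'"
      "crossed n c \<and> 0 < tau n c * rate n c"
    hence ratio: "(1 - b) * tau n c' < (1 + b) * tau n c" and crossed': "crossed n c'"
      and big: "M < tau n c' * rate n c'" and crossed: "crossed n c" by auto
    have \<tau>': "tau n c' > 0" using tau_pos[OF crossed' c'(1)] .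
    have "(1 + al) * (1 - b) - (1 + al / 3) * (1 + b) = 4 / 15 * al * (1 - al)"
      unfolding b_def by (simp add: algebra_simps)
    moreover have "0 \<le> 4 / 15 * al * (1 - al)" using al by simp
    ultimately have "(1 + al / 3) * (1 + b) \<le> (1 + al) * (1 - b)" by linarith
    hence "(1 + al / 3) * (1 + b) * tau n c \<le> (1 + al) * (1 - b) * tau n c"
      using tau_pos[OF crossed c] by (intro mult_right_mono) auto
    moreover have "(1 + al / 3) * ((1 - b) * tau n c') < (1 + al / 3) * ((1 + b) * tau n c)"
      using ratio al by (intro mult_strict_left_mono) auto
    ultimately have "(1 - b) * ((1 + al / 3) * tau n c') < (1 - b) * ((1 + al) * tau n c)"
      by (simp add: mult_ac)
    hence later: "(1 + al / 3) * tau n c' \<le> (1 + al) * tau n c" using al unfolding b_def by simp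
    have "exp (- 2 * (al / 3) * (tau n c' * rate n c')) < exp (- 2 * (al / 3) * M)"
      using big al by simp
    also have "\<dots> = e / (2 * K)" unfolding M_def using al K e by (simp add: exp_minus exp_ln)
    finally have small: "K * exp (- 2 * (al / 3) * (tau n c' * rate n c')) < e / 2"
      using K by (simp add: field_simps)
    have "profile n ((1 + al) * tau n c) \<le> profile n ((1 + al / 3) * tau n c')"
      using decay_sum_antimono[OF sorted later] .
    also have "\<dots> \<le> c' + (1 + al / 3) * tau n c' / ((1 + al / 3) * tau n c' - tau n c')
        * exp (- 2 * ((1 + al / 3) * tau n c' - tau n c') * rate n c')"
      by (rule decay_sum_upper_bound[OF sorted crossed' c'(1)]) (use \<tau>' al in simp)
    also have "\<dots> = c' + K * exp (- 2 * (al / 3) * (tau n c' * rate n c'))"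
    proof -
      have gap: "(1 + al / 3) * tau n c' - tau n c' = al / 3 * tau n c'" by (simp add: algebra_simps)
      show ?thesis unfolding gap K_def using \<tau>' al by (simp add: mult_ac)
    qed
    finally show "profile n ((1 + al) * tau n c) < e" using small c' by linarith
  qed
qed

lemma cutoff_criterion_imp_cutoff_time:
  assumes crit: cutoff_criterion and c: "c > 0"
  shows "L2_cutoff_time d (\<lambda>n. tau n c)"
  unfolding L2_cutoff_time_def
proof (intro conjI allI impI)
  have crossed: "eventually (\<lambda>n. crossed n c) sequentially"
    using crit c unfolding cutoff_criterion_def by auto
  show "eventually (\<lambda>n. tau n c > 0) sequentially"
    using crossed by (rule eventually_mono) (use tau_pos c in auto)
  fix al :: real assume al: "0 < al \<and> al < 1"
  show "(\<lambda>n. d n ((1 + al) * tau n c)) \<longlonglongrightarrow> 0"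
  proof (rule order_tendstoI)
    fix e :: real assume "0 < e"
    have "ln (1 + e\<^sup>2) > 0" using \<open>0 < e\<close> by (intro ln_gt_zero) simp
    have "eventually (\<lambda>n. profile n ((1 + al) * tau n c) < ln (1 + e\<^sup>2)) sequentially"
      using profile_small_after_tau[OF crit c _ _ \<open>ln (1 + e\<^sup>2) > 0\<close>] al by blast
    thus "eventually (\<lambda>n. d n ((1 + al) * tau n c) < e) sequentially"
      by eventually_elim (rule distance_lt_of_profile_lt[OF \<open>0 < e\<close>])
  qed (use d_nonneg in \<open>auto intro!: always_eventually intro: less_le_trans\<close>)
  show "filterlim (\<lambda>n. d n ((1 - al) * tau n c)) at_top sequentially"
    unfolding filterlim_at_top
  proof
    fix Z :: real
    show "eventually (\<lambda>n. Z \<le> d n ((1 - al) * tau n c)) sequentially"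
      using cutoff_criterion_eventually[OF crit c, of "ln (Z\<^sup>2 + 1) / (2 * al)"]
    proof eventually_elim
      fix n assume "crossed n c \<and> ln (Z\<^sup>2 + 1) / (2 * al) < tau n c * rate n c"
      hence crossed: "crossed n c" and "ln (Z\<^sup>2 + 1) < 2 * ((tau n c - (1 - al) * tau n c) * rate n c)"
        using al by (auto simp: field_simps)
      hence "Z\<^sup>2 + 1 < exp (2 * ((tau n c - (1 - al) * tau n c) * rate n c))"
        using exp_less_mono by (metis add_pos_nonneg exp_ln zero_le_power2 zero_less_one add.commute)
      also have "\<dots> \<le> profile n ((1 - al) * tau n c) + 1"
        using profile_ge_of_rate_gap[OF crossed c, of "(1 - al) * tau n c"] tau_pos[OF crossed c] al by simp
      finally have "Z\<^sup>2 < profile n ((1 - al) * tau n c)" by simp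
      thus "Z \<le> d n ((1 - al) * tau n c)" by (meson distance_gt_of_profile_gt less_imp_le)
    qed
  qed
qed

context
  fixes t0 :: "nat \<Rightarrow> real"
  assumes cut: "L2_cutoff_time d t0"
begin

lemma cutoff_time_profile_small:
  assumes "x > 0"
  shows "eventually (\<lambda>n. profile n (3/2 * t0 n) < x) sequentially"
proof -
  have "(\<lambda>n. d n (3/2 * t0 n)) \<longlonglongrightarrow> 0"
    using cut unfolding L2_cutoff_time_def by (auto dest: spec[of _ "1/2"])
  hence "eventually (\<lambda>n. d n (3/2 * t0 n) < sqrt x) sequentially"
    using assms by (intro order_tendstoD(2)) auto
  thus ?thesis
  proof eventually_elim
    fix n assume "d n (3/2 * t0 n) < sqrt x"
    thus "profile n (3/2 * t0 n) < x" using profile_lt_of_distance_lt[of n "3/2 * t0 n" "sqrt x"] assms by simp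
  qed
qed

lemma cutoff_time_profile_large:
  "eventually (\<lambda>n. Z < profile n (t0 n / 2)) sequentially"
proof -
  have "filterlim (\<lambda>n. d n (t0 n / 2)) at_top sequentially"
    using cut unfolding L2_cutoff_time_def by (auto dest: spec[of _ "1/2"])
  hence "eventually (\<lambda>n. sqrt (exp Z) \<le> d n (t0 n / 2)) sequentially"
    unfolding filterlim_at_top by blast
  thus ?thesis
  proof (rule eventually_mono)
    fix n assume "sqrt (exp Z) \<le> d n (t0 n / 2)"
    hence "ln (1 + exp Z) \<le> profile n (t0 n / 2)"
      using profile_gt_of_distance_ge[of "sqrt (exp Z)" n "t0 n / 2"] by simp
    moreover have "Z < ln (1 + exp Z)"
      using ln_less_cancel_iff[of "exp Z" "1 + exp Z"] by (simp add: add_pos_pos)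
    ultimately show "Z < profile n (t0 n / 2)" by linarith
  qed
qed

lemma cutoff_time_imp_crossed:
  assumes c: "c > 0"
  shows "eventually (\<lambda>n. crossed n c) sequentially"
proof -
  have "eventually (\<lambda>n. t0 n > 0) sequentially" using cut unfolding L2_cutoff_time_def by blast
  with cutoff_time_profile_large[of c] show ?thesis
  proof eventually_elim
  fix n assume "c < profile n (t0 n / 2)" "t0 n > 0"
  hence "c < cumsum (a n) (N n)"
    using decay_sum_antimono[OF sorted, of 0 "t0 n / 2" n] by (simp add: decay_sum_def cumsum_def)
  moreover from this have "1 \<le> N n" using c by (cases "N n") (auto simp: cumsum_def)
  ultimately show "crossed n c" unfolding crosses_def by blast
  qed
qed

lemma cutoff_time_rate_large:
  assumes c: "c > 0"
  shows "eventually (\<lambda>n. K < t0 n * rate n c) sequentially"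
proof -
  have "eventually (\<lambda>n. t0 n > 0) sequentially" using cut unfolding L2_cutoff_time_def by blast
  moreover have pos: "c * exp (- 3 * K) > 0" using c by simp
  note cutoff_time_profile_small[OF pos]
  moreover note cutoff_time_imp_crossed[OF c]
  ultimately show ?thesis
  proof eventually_elim
    fix n assume small: "profile n (3/2 * t0 n) < c * exp (- 3 * K)"
      and crossed: "crossed n c" and t0: "t0 n > 0"
    have "c * exp (- 2 * (3/2 * t0 n) * rate n c) < c * exp (- 3 * K)"
      using decay_sum_ge_threshold[OF sorted crossed c, of "3/2 * t0 n"] small t0 by simp
    thus "K < t0 n * rate n c" using c by simp
  qed
qed

lemma cutoff_time_imp_cutoff_criterion: cutoff_criterion
  unfolding cutoff_criterion_def
proof (intro allI impI conjI)
  fix c :: real assume c: "c > 0"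
  note crossed = cutoff_time_imp_crossed[OF c]
  show "eventually (\<lambda>n. crossed n c) sequentially" by (rule crossed)
  show "filterlim (\<lambda>n. tau n c * rate n c) at_top sequentially"
    unfolding filterlim_at_top_dense
  proof
    fix Z :: real
    text \<open>If \<open>\<tau>(c)\<rho>\<close> stayed bounded, then \<open>t0/2 > 2\<tau>(c)\<close> by \<open>cutoff_time_rate_large\<close>, and the decay
      sum at \<open>t0/2\<close> would be at most \<open>c + 2\<close> by \<open>decay_sum_upper_bound\<close>, although it diverges.\<close>
    define K where "K = max Z 1"
    show "eventually (\<lambda>n. Z < tau n c * rate n c) sequentially"
      using crossed cutoff_time_rate_large[OF c, of "4 * K"] cutoff_time_profile_large[of "c + 2"]
    proof eventually_elim
      fix n assume crossed: "crossed n c" and large: "4 * K < t0 n * rate n c"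
        and far: "c + 2 < profile n (t0 n / 2)"
      have R: "rate n c > 0" and \<tau>: "tau n c > 0" using rate_pos[OF crossed] tau_pos[OF crossed c] by auto
      show "Z < tau n c * rate n c"
      proof (rule ccontr)
        assume "\<not> Z < tau n c * rate n c"
        hence "4 * (tau n c * rate n c) < t0 n * rate n c" using large unfolding K_def by simp
        hence T4: "4 * tau n c < t0 n" using R by (simp add: mult_ac)
        define t where "t = t0 n / 2"
        have tt: "t > tau n c" and q: "t / (t - tau n c) \<le> 2"
          using T4 \<tau> unfolding t_def by (auto simp: field_simps)
        have "- 2 * (t - tau n c) * rate n c \<le> 0" using tt R by (intro mult_nonpos_nonneg) auto
        hence "exp (- 2 * (t - tau n c) * rate n c) \<le> 1" by simp
        hence "t / (t - tau n c) * exp (- 2 * (t - tau n c) * rate n c) \<le> 2 * 1"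
          using q tt \<tau> by (intro mult_mono) auto
        hence "profile n t \<le> c + 2" using decay_sum_upper_bound[OF sorted crossed c tt] by linarith
        thus False using far unfolding t_def by simp
      qed
    qed
  qed
qed

end

lemma distance_le_imp_time_ge:
  assumes crossed: "crossed n c" and c: "c > 0" and e: "e > 0" and s: "0 \<le> s" "d n s \<le> e"
  shows "tau n c - ln (1 + e\<^sup>2) / 2 / rate n c \<le> s"
proof (rule ccontr)
  assume "\<not> ?thesis"
  hence "ln (1 + e\<^sup>2) < 2 * ((tau n c - s) * rate n c)"
    using rate_pos[OF crossed] by (simp add: field_simps)
  hence "1 + e\<^sup>2 < exp (2 * ((tau n c - s) * rate n c))"
    using exp_less_mono by (metis add_pos_nonneg exp_ln zero_le_power2 zero_less_one)
  hence "e\<^sup>2 < profile n s" using profile_ge_of_rate_gap[OF crossed c s(1)] by simp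
  thus False using distance_gt_of_profile_gt[of e n s] s(2) by simp
qed

lemma distance_small_after_window:
  assumes crit: cutoff_criterion and e: "e > 0" and c: "c > 0"
  shows "eventually (\<lambda>n. d n (tau n c + sqrt (tau n c / rate n c)) \<le> e \<and> 1 < tau n c * rate n c
    \<and> crossed n c) sequentially"
proof -
  text \<open>Split the decay sum at the first crossings for \<open>c\<close> and for a smaller \<open>c'\<close>; at the time
    \<open>\<tau> + w\<close> with \<open>w = \<surd>(\<tau>/\<rho>)\<close>, each of the three pieces of
    \<open>decay_sum_upper_bound_split\<close> is eventually below a third of \<open>ln (1 + e\<^sup>2)\<close>.\<close>
  define \<eta> where "\<eta> = ln (1 + e\<^sup>2)"
  have \<eta>: "\<eta> > 0" unfolding \<eta>_def using e by (intro ln_gt_zero) simp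
  define c' where "c' = min c (\<eta> / 3)"
  have c': "0 < c'" "c' \<le> c" "c' \<le> \<eta> / 3" unfolding c'_def using c \<eta> by auto
  define m where "m = ln (3 * c / \<eta>) / 2"
  have third: "(0::real) < 1/3" "(1/3::real) < 1" by auto
  show ?thesis
    using cutoff_criterion_eventually[OF crit c, of "max 1 ((3 / \<eta>)\<^sup>2)"]
      cutoff_criterion_eventually[OF crit c'(1), of "2 * m"] tau_ratio_bound[OF crit c c'(1) third]
  proof eventually_elim
    fix n assume "crossed n c \<and> max 1 ((3 / \<eta>)\<^sup>2) < tau n c * rate n c"
      "crossed n c' \<and> 2 * m < tau n c' * rate n c'" "(1 - 1/3) * tau n c' < (1 + 1/3) * tau n c"
    hence crossed: "crossed n c" and crossed': "crossed n c'" and big: "1 < tau n c * rate n c"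
      and big\<eta>: "(3 / \<eta>)\<^sup>2 < tau n c * rate n c" and ratio: "tau n c' < 2 * tau n c"
      and big': "2 * m < tau n c' * rate n c'" by auto
    define \<tau> \<rho> where "\<tau> = tau n c" and "\<rho> = rate n c"
    have \<tau>: "\<tau> > 0" and \<rho>: "\<rho> > 0" and \<rho>': "rate n c' > 0"
      using tau_pos[OF crossed c] rate_pos[OF crossed] rate_pos[OF crossed'] unfolding \<tau>_def \<rho>_def by auto
    define w where "w = sqrt (\<tau> / \<rho>)"
    have w: "w > 0" unfolding w_def using \<tau> \<rho> by simp
    have "3 / \<eta> < sqrt (\<tau> * \<rho>)" using big\<eta> \<eta> unfolding \<tau>_def \<rho>_def by (simp add: real_less_rsqrt)
    hence "1 / sqrt (\<tau> * \<rho>) < \<eta> / 3" using \<tau> \<rho> \<eta> by (simp add: field_simps)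
    hence tail: "(\<tau> + w) / w * exp (- 2 * w * \<rho>) < \<eta> / 3"
      using window_decay_bound[OF \<tau> \<rho>] unfolding w_def by linarith
    define t where "t = \<tau> + w"
    have middle: "c * exp (- 2 * t * rate n c') < \<eta> / 3"
    proof -
      have "tau n c' * rate n c' < 2 * \<tau> * rate n c'"
        using ratio \<rho>' unfolding \<tau>_def by simp
      hence "m < \<tau> * rate n c'" using big' by simp
      hence "- 2 * t * rate n c' < - ln (3 * c / \<eta>)"
        using mult_pos_pos[OF w \<rho>'] unfolding t_def m_def by (simp add: algebra_simps)
      hence "exp (- 2 * t * rate n c') < exp (- ln (3 * c / \<eta>))" by simp
      also have "\<dots> = \<eta> / (3 * c)" using c \<eta> by (simp add: exp_minus)
      finally show ?thesis using c by (simp add: field_simps)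
    qed
    have "profile n t \<le> c' + c * exp (- 2 * t * rate n c') + t / (t - \<tau>) * exp (- 2 * (t - \<tau>) * \<rho>)"
      unfolding \<tau>_def \<rho>_def by (rule decay_sum_upper_bound_split[OF sorted crossed c'(1,2)])
        (use w in \<open>simp add: t_def \<tau>_def\<close>)
    moreover have "t / (t - \<tau>) * exp (- 2 * (t - \<tau>) * \<rho>) = (\<tau> + w) / w * exp (- 2 * w * \<rho>)"
      unfolding t_def by simp
    ultimately have "profile n t < \<eta>" using tail middle c'(3) by linarith
    hence "d n t < e" using distance_lt_of_profile_lt e unfolding \<eta>_def by blast
    thus "d n (tau n c + sqrt (tau n c / rate n c)) \<le> e \<and> 1 < tau n c * rate n c \<and> crossed n c"
      using big crossed unfolding t_def w_def \<tau>_def \<rho>_def by simp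
  qed
qed

lemma mixing_time_window:
  assumes crit: cutoff_criterion and e: "e > 0" and c: "c > 0"
  shows "\<exists>C. eventually (\<lambda>n. \<bar>Inf {t. t \<ge> 0 \<and> d n t \<le> e} - tau n c\<bar> \<le> C * sqrt (tau n c / rate n c)) sequentially"
proof (intro exI[of _ "1 + ln (1 + e\<^sup>2) / 2"])
  show "eventually (\<lambda>n. \<bar>Inf {t. t \<ge> 0 \<and> d n t \<le> e} - tau n c\<bar>
      \<le> (1 + ln (1 + e\<^sup>2) / 2) * sqrt (tau n c / rate n c)) sequentially"
    using distance_small_after_window[OF crit e c]
  proof (rule eventually_mono)
    fix n assume "d n (tau n c + sqrt (tau n c / rate n c)) \<le> e \<and> 1 < tau n c * rate n c \<and> crossed n c"
    hence admissible: "d n (tau n c + sqrt (tau n c / rate n c)) \<le> e"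
      and big: "1 < tau n c * rate n c" and crossed: "crossed n c" by auto
    define w where "w = sqrt (tau n c / rate n c)"
    define E where "E = {t. t \<ge> 0 \<and> d n t \<le> e}"
    have \<tau>: "tau n c > 0" and \<rho>: "rate n c > 0" using tau_pos[OF crossed c] rate_pos[OF crossed] by auto
    have "tau n c + w \<in> E" using admissible \<tau> \<rho> unfolding E_def w_def by simp
    hence above: "Inf E \<le> tau n c + w" by (intro cInf_lower) (auto simp: E_def intro: bdd_belowI[of _ 0])
    have below: "tau n c - ln (1 + e\<^sup>2) / 2 / rate n c \<le> Inf E"
      using \<open>tau n c + w \<in> E\<close> distance_le_imp_time_ge[OF crossed c e] unfolding E_def
      by (intro cInf_greatest) auto
    have "1 / rate n c \<le> w"
    proof -
      have "(1 / rate n c)\<^sup>2 \<le> tau n c / rate n c" using big \<rho> by (simp add: power2_eq_square field_simps)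
      thus ?thesis unfolding w_def by (simp add: real_le_rsqrt)
    qed
    hence "ln (1 + e\<^sup>2) / 2 / rate n c \<le> ln (1 + e\<^sup>2) / 2 * w"
      using mult_left_mono[of "1 / rate n c" w "ln (1 + e\<^sup>2) / 2"] by simp
    moreover have "0 \<le> w" "0 \<le> ln (1 + e\<^sup>2) / 2 * w" unfolding w_def using \<tau> \<rho> by simp_all
    ultimately show "\<bar>Inf E - tau n c\<bar> \<le> (1 + ln (1 + e\<^sup>2) / 2) * w"
      using above below unfolding abs_le_iff distrib_right mult_1 by linarith
  qed
qed

lemma has_L2_cutoff_iff_cutoff_criterion: "has_L2_cutoff d \<longleftrightarrow> cutoff_criterion"
  unfolding has_L2_cutoff_def
  using cutoff_time_imp_cutoff_criterion cutoff_criterion_imp_cutoff_time zero_less_one by blast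

end
section \<open>The product chain squeezed by its decay sum\<close>

context
  fixes l :: nat and S :: "nat \<Rightarrow> 'a set" and L :: "nat \<Rightarrow> 'a \<Rightarrow> 'a \<Rightarrow> real"
    and \<pi> \<mu> :: "nat \<Rightarrow> 'a \<Rightarrow> real" and p :: "nat \<Rightarrow> real"
    and lam :: "nat \<Rightarrow> nat \<Rightarrow> real" and phi :: "nat \<Rightarrow> nat \<Rightarrow> 'a \<Rightarrow> real" and sig :: "nat \<Rightarrow> nat \<times> nat"
  assumes chains: "\<And>i. i < l \<Longrightarrow> finite_irred_chain (S i) (L i) (\<pi> i)"
    and init: "\<And>i. i < l \<Longrightarrow> is_distribution (S i) (\<mu> i)"
    and ppos: "\<And>i. i < l \<Longrightarrow> p i > 0"
    and eig: "\<And>i. i < l \<Longrightarrow> orthonormal_eigendata (S i) (L i) (\<pi> i) (lam i) (phi i)"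
    and enum: "sorted_enum l S p lam sig"
begin

lemma product_sorted_spectrum:
  "sorted_spectrum (num_eig l S) (\<lambda>k. (psi S \<mu> phi sig k)\<^sup>2) (rho p lam sig)"
proof -
  have "rho p lam sig k > 0" if k: "1 \<le> k" "k \<le> num_eig l S" for k
  proof -
    obtain i j where ij: "sig k = (i, j)" by fastforce
    have "sig k \<in> {(i, j). i < l \<and> 1 \<le> j \<and> j < card (S i)}"
      using enum k unfolding sorted_enum_def by (auto dest: bij_betw_apply)
    hence "i < l" "1 \<le> j" "j < card (S i)" using ij by auto
    thus ?thesis
      using eigenvalue_pos[OF chains eig] ppos unfolding rho_def ij by simp
  qed
  thus ?thesis using enum unfolding sorted_spectrum_def sorted_enum_def by auto
qed

lemma product_decay_sum_eq:
  "decay_sum (num_eig l S) (\<lambda>k. (psi S \<mu> phi sig k)\<^sup>2) (rho p lam sig) t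
    = (\<Sum>i<l. \<Sum>j\<in>{1..<card (S i)}. exp (- 2 * t * (p i * lam i j)) * (\<Sum>u\<in>S i. \<mu> i u * phi i j u)\<^sup>2)"
proof -
  define g where "g = (\<lambda>(i, j). exp (- 2 * t * (p i * lam i j)) * (\<Sum>u\<in>S i. \<mu> i u * phi i j u)\<^sup>2)"
  have "decay_sum (num_eig l S) (\<lambda>k. (psi S \<mu> phi sig k)\<^sup>2) (rho p lam sig) t
      = (\<Sum>k\<in>{1..num_eig l S}. g (sig k))"
    unfolding decay_sum_def g_def psi_def rho_def by (intro sum.cong refl) (simp add: case_prod_beta mult.commute)
  also have "\<dots> = sum g {(i, j). i < l \<and> 1 \<le> j \<and> j < card (S i)}"
    using enum unfolding sorted_enum_def by (intro sum.reindex_bij_betw) auto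
  also have "\<dots> = sum g (Sigma {..<l} (\<lambda>i. {1..<card (S i)}))"
    by (rule arg_cong[where f = "sum g"]) auto
  also have "\<dots> = (\<Sum>i<l. \<Sum>j\<in>{1..<card (S i)}. g (i, j))"
    using sum.Sigma[of "{..<l}" "\<lambda>i. {1..<card (S i)}" "\<lambda>i j. g (i, j)"] by simp
  finally show ?thesis unfolding g_def by simp
qed

lemma prod_d2_squeezed:
  fixes t :: real
  defines "F \<equiv> decay_sum (num_eig l S) (\<lambda>k. (psi S \<mu> phi sig k)\<^sup>2) (rho p lam sig) t"
  shows "F \<le> (prod_d2 l S p L \<pi> \<mu> t)\<^sup>2" and "(prod_d2 l S p L \<pi> \<mu> t)\<^sup>2 \<le> exp F - 1"
proof -
  have nonneg: "\<forall>i\<in>{..<l}. 0 \<le> (\<Sum>j\<in>{1..<card (S i)}. exp (- 2 * t * (p i * lam i j)) * (\<Sum>u\<in>S i. \<mu> i u * phi i j u)\<^sup>2)"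
    by (auto intro!: sum_nonneg)
  note d2 = prod_d2_sq_eq[OF chains init eig, where p = p and t = t]
  show "F \<le> (prod_d2 l S p L \<pi> \<mu> t)\<^sup>2"
    unfolding F_def product_decay_sum_eq using d2 sum_le_prod_one_plus[OF _ nonneg] by simp
  show "(prod_d2 l S p L \<pi> \<mu> t)\<^sup>2 \<le> exp F - 1"
    unfolding F_def product_decay_sum_eq using d2 prod_one_plus_le_exp_sum[OF _ nonneg] by simp
qed

lemma prod_d2_nonneg: "prod_d2 l S p L \<pi> \<mu> t \<ge> 0"
proof -
  have "\<forall>y\<in>prod_space l S. prod_measure l \<pi> y > 0"
    unfolding prod_space_def prod_measure_def using chains unfolding finite_irred_chain_def stationary_def
    by (auto intro!: prod_pos simp: PiE_def Pi_def)
  thus ?thesis unfolding prod_d2_def d2_def by (auto intro!: sum_nonneg simp: less_imp_le)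
qed

end

lemma product_chain_L2_sandwich:
  fixes ell :: "nat \<Rightarrow> nat" and S :: "nat \<Rightarrow> nat \<Rightarrow> 'a set" and L :: "nat \<Rightarrow> nat \<Rightarrow> 'a \<Rightarrow> 'a \<Rightarrow> real"
    and \<pi> \<mu> :: "nat \<Rightarrow> nat \<Rightarrow> 'a \<Rightarrow> real" and p :: "nat \<Rightarrow> nat \<Rightarrow> real"
    and lam :: "nat \<Rightarrow> nat \<Rightarrow> nat \<Rightarrow> real" and phi :: "nat \<Rightarrow> nat \<Rightarrow> nat \<Rightarrow> 'a \<Rightarrow> real"
    and sig :: "nat \<Rightarrow> nat \<Rightarrow> nat \<times> nat"
  assumes chains: "\<And>n i. i < ell n \<Longrightarrow> finite_irred_chain (S n i) (L n i) (\<pi> n i)"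
    and init: "\<And>n i. i < ell n \<Longrightarrow> is_distribution (S n i) (\<mu> n i)"
    and ppos: "\<And>n i. i < ell n \<Longrightarrow> p n i > 0"
    and eig: "\<And>n i. i < ell n \<Longrightarrow> orthonormal_eigendata (S n i) (L n i) (\<pi> n i) (lam n i) (phi n i)"
    and enum: "\<And>n. sorted_enum (ell n) (S n) (p n) (lam n) (sig n)"
  shows "L2_sandwich (\<lambda>n. num_eig (ell n) (S n)) (\<lambda>n k. (psi (S n) (\<mu> n) (phi n) (sig n) k)\<^sup>2)
    (\<lambda>n. rho (p n) (lam n) (sig n)) (\<lambda>n t. prod_d2 (ell n) (S n) (p n) (L n) (\<pi> n) (\<mu> n) t)"
  by unfold_locales
    (rule product_sorted_spectrum prod_d2_nonneg prod_d2_squeezed(1) prod_d2_squeezed(2);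
     rule chains init ppos eig enum; assumption)+

theorem theorem4p2:
  fixes ell :: "nat \<Rightarrow> nat"
    and S :: "nat \<Rightarrow> nat \<Rightarrow> 'a set"
    and L :: "nat \<Rightarrow> nat \<Rightarrow> 'a \<Rightarrow> 'a \<Rightarrow> real"
    and \<pi> \<mu> :: "nat \<Rightarrow> nat \<Rightarrow> 'a \<Rightarrow> real"
    and p :: "nat \<Rightarrow> nat \<Rightarrow> real"
    and lam :: "nat \<Rightarrow> nat \<Rightarrow> nat \<Rightarrow> real"
    and phi :: "nat \<Rightarrow> nat \<Rightarrow> nat \<Rightarrow> 'a \<Rightarrow> real"
    and sig :: "nat \<Rightarrow> nat \<Rightarrow> nat \<times> nat"
  assumes chains: "\<And>n i. i < ell n \<Longrightarrow> finite_irred_chain (S n i) (L n i) (\<pi> n i)"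
    and rev: "\<And>n i. i < ell n \<Longrightarrow> reversible (S n i) (L n i) (\<pi> n i)"
    and init: "\<And>n i. i < ell n \<Longrightarrow> is_distribution (S n i) (\<mu> n i)"
    and ppos: "\<And>n i. i < ell n \<Longrightarrow> p n i > 0"
    and psum: "\<And>n. (\<Sum>i<ell n. p n i) \<le> 1"
    and eig: "\<And>n i. i < ell n \<Longrightarrow>
                orthonormal_eigendata (S n i) (L n i) (\<pi> n i) (lam n i) (phi n i)"
    and enum: "\<And>n. sorted_enum (ell n) (S n) (p n) (lam n) (sig n)"
  shows "(has_L2_cutoff (\<lambda>n t. prod_d2 (ell n) (S n) (p n) (L n) (\<pi> n) (\<mu> n) t) \<longleftrightarrow>
           (\<forall>c>0. (\<forall>\<^sub>F n in sequentially. jt_defined (ell n) (S n) (\<mu> n) (phi n) (sig n) c) \<and>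
              filterlim (\<lambda>n. taut (ell n) (S n) (p n) (lam n) (\<mu> n) (phi n) (sig n) c *
                              rho (p n) (lam n) (sig n) (jt (ell n) (S n) (\<mu> n) (phi n) (sig n) c))
                at_top sequentially))
       \<and> (has_L2_cutoff (\<lambda>n t. prod_d2 (ell n) (S n) (p n) (L n) (\<pi> n) (\<mu> n) t) \<longrightarrow>
           (\<forall>c>0. L2_cutoff_time (\<lambda>n t. prod_d2 (ell n) (S n) (p n) (L n) (\<pi> n) (\<mu> n) t)
                    (\<lambda>n. taut (ell n) (S n) (p n) (lam n) (\<mu> n) (phi n) (sig n) c)) \<and>
           (\<forall>\<epsilon>>0. \<forall>c>0. \<exists>C. \<forall>\<^sub>F n in sequentially.
              \<bar>prod_T2 (ell n) (S n) (p n) (L n) (\<pi> n) (\<mu> n) \<epsilon>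
                 - taut (ell n) (S n) (p n) (lam n) (\<mu> n) (phi n) (sig n) c\<bar>
              \<le> C * sqrt (taut (ell n) (S n) (p n) (lam n) (\<mu> n) (phi n) (sig n) c /
                          rho (p n) (lam n) (sig n) (jt (ell n) (S n) (\<mu> n) (phi n) (sig n) c))))"
proof -
  let ?d = "\<lambda>n t. prod_d2 (ell n) (S n) (p n) (L n) (\<pi> n) (\<mu> n) t"
  interpret L2_sandwich "\<lambda>n. num_eig (ell n) (S n)" "\<lambda>n k. (psi (S n) (\<mu> n) (phi n) (sig n) k)\<^sup>2"
    "\<lambda>n. rho (p n) (lam n) (sig n)" ?d
    using chains init ppos eig enum by (rule product_chain_L2_sandwich)
  have spectral_notions:
    "jt_defined (ell n) (S n) (\<mu> n) (phi n) (sig n) c = crossed n c"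
    "jt (ell n) (S n) (\<mu> n) (phi n) (sig n) c
      = first_crossing (num_eig (ell n) (S n)) (\<lambda>k. (psi (S n) (\<mu> n) (phi n) (sig n) k)\<^sup>2) c"
    "taut (ell n) (S n) (p n) (lam n) (\<mu> n) (phi n) (sig n) c = tau n c"
    "prod_T2 (ell n) (S n) (p n) (L n) (\<pi> n) (\<mu> n) \<epsilon> = Inf {t. t \<ge> 0 \<and> ?d n t \<le> \<epsilon>}" for n c \<epsilon>
    unfolding jt_defined_def crosses_def jt_def first_crossing_def taut_def crossing_time_def
      cumsum_def prod_T2_def T2_def prod_d2_def by simp_all
  show ?thesis
    unfolding spectral_notions has_L2_cutoff_iff_cutoff_criterion
    using cutoff_criterion_imp_cutoff_time mixing_time_window unfolding cutoff_criterion_def by blast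
qed

end
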